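(* Let $H_0,H_1$ be complex Hilbert spaces, $G$ a densely defined closed operator from $H_0$ into $H_1$ and $D$ a densely defined closed operator from $H_1$ into $H_0$ with $-G^*\subset D$. Let $H$ be a Hilbert space and $\kappa\in\mathcal L(\mathrm{BD}(G),H)$ injective with dense range, and let $a\in\mathcal L(H_1)$, $m\in\mathcal L(H_0)$ be coercive. Then the Dirichlet-to-Neumann operator $\Lambda_H$ in $H$ associated with $-DaG+m$ is invertible and \[ \Lambda_H^{-1}\psi=\kappa\begin{pmatrix}\pi_{\mathrm{BD}(G)} & 0\end{pmatrix}\begin{pmatrix} m & -\mathring D\\ -G & a^{-1}\end{pmatrix}^{-1}\begin{pmatrix} I\\ -a^{-1}G\end{pmatrix}\kappa^*\psi \] for all $\psi\in H$, where the matrix operator acts in $H_0\times H_1$ with domain $\mathrm{dom}(G)\times\mathrm{dom}(\mathring D)$ (and is invertible).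
   Context: $\mathring D=-G^*$, $\mathring G=-D^*$. Domains carry graph inner products. $\mathrm{BD}(G)$ (resp. $\mathrm{BD}(D)$) is the orthogonal complement of $\mathrm{dom}(\mathring G)$ in $\mathrm{dom}(G)$ (resp. of $\mathrm{dom}(\mathring D)$ in $\mathrm{dom}(D)$) with induced inner products; $\pi_{\mathrm{BD}(G)},\pi_{\mathrm{BD}(D)}$ are the orthogonal projections. $G$ maps $\mathrm{BD}(G)$ into $\mathrm{BD}(D)$. Coercive: $\mathrm{Re}(Mx,x)\ge\mu\|x\|^2$ for some $\mu>0$. For coercive $a,m$ and $u_0\in\mathrm{BD}(G)$ there is a unique $u\in\mathrm{dom}(G)$ with $aGu\in\mathrm{dom}(D)$, $mu-DaGu=0$, $u-u_0\in\mathrm{dom}(\mathring G)$; $\Lambda u_0=\pi_{\mathrm{BD}(D)}(aGu)$. $\kappa^*\colon H\to\mathrm{BD}(G)$ is the adjoint of $\kappa$. $\Lambda_H$: $\varphi\in\mathrm{dom}(\Lambda_H)$, $\Lambda_H\varphi=\psi$ iff there is $u_0\in\mathrm{BD}(G)$ with $\kappa(u_0)=\varphi$ and $\Lambda u_0=G\kappa^*\psi$. *)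

theory Defs
  imports "HOL-Analysis.Analysis"
begin

class complex_vector = real_vector +
  fixes scaleC :: "complex \<Rightarrow> 'a \<Rightarrow> 'a"
  assumes scaleC_add_right: "scaleC c (x + y) = scaleC c x + scaleC c y"
    and scaleC_add_left: "scaleC (c + d) x = scaleC c x + scaleC d x"
    and scaleC_scaleC: "scaleC c (scaleC d x) = scaleC (c * d) x"
    and scaleC_one: "scaleC 1 x = x"
    and scaleR_scaleC: "scaleR r x = scaleC (complex_of_real r) x"

class complex_inner = complex_vector + real_normed_vector +
  fixes cinner :: "'a \<Rightarrow> 'a \<Rightarrow> complex"
  assumes cinner_commute: "cinner x y = cnj (cinner y x)"
    and cinner_add_left: "cinner (x + y) z = cinner x z + cinner y z"
    and cinner_scaleC_left: "cinner (scaleC c x) y = cnj c * cinner x y"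
    and cinner_nonneg: "Im (cinner x x) = 0 \<and> Re (cinner x x) \<ge> 0"
    and cinner_eq_zero_iff: "cinner x x = 0 \<longleftrightarrow> x = 0"
    and norm_eq_sqrt_cinner: "norm x = sqrt (Re (cinner x x))"

class chilbert_space = complex_inner + complete_space

definition csubspace :: "'a::complex_vector set \<Rightarrow> bool" where
  "csubspace S \<longleftrightarrow> 0 \<in> S \<and> (\<forall>x\<in>S. \<forall>y\<in>S. x + y \<in> S) \<and> (\<forall>c. \<forall>x\<in>S. scaleC c x \<in> S)"

definition clinear_on :: "'a::complex_vector set \<Rightarrow> ('a \<Rightarrow> 'b::complex_vector) \<Rightarrow> bool" where
  "clinear_on S f \<longleftrightarrow> csubspace S \<and> (\<forall>x\<in>S. \<forall>y\<in>S. f (x + y) = f x + f y)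
     \<and> (\<forall>c. \<forall>x\<in>S. f (scaleC c x) = scaleC c (f x))"

definition bounded_clinear_op :: "('a::complex_inner \<Rightarrow> 'b::complex_inner) \<Rightarrow> bool" where
  "bounded_clinear_op f \<longleftrightarrow> clinear_on UNIV f \<and> (\<exists>K. \<forall>x. norm (f x) \<le> K * norm x)"

definition densely_defined_closed :: "'a::complex_inner set \<Rightarrow> ('a \<Rightarrow> 'b::complex_inner) \<Rightarrow> bool" where
  "densely_defined_closed Sd f \<longleftrightarrow> clinear_on Sd f \<and> closure Sd = UNIV
     \<and> closed {(x, f x) | x. x \<in> Sd}"

definition adj_dom :: "'a::complex_inner set \<Rightarrow> ('a \<Rightarrow> 'b::complex_inner) \<Rightarrow> 'b set" where
  "adj_dom Sd f = {y. \<exists>z. \<forall>x\<in>Sd. cinner (f x) y = cinner x z}"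

definition adj :: "'a::complex_inner set \<Rightarrow> ('a \<Rightarrow> 'b::complex_inner) \<Rightarrow> 'b \<Rightarrow> 'a" where
  "adj Sd f y = (THE z. \<forall>x\<in>Sd. cinner (f x) y = cinner x z)"

definition op_subset :: "'a set \<Rightarrow> ('a \<Rightarrow> 'b) \<Rightarrow> 'a set \<Rightarrow> ('a \<Rightarrow> 'b) \<Rightarrow> bool" where
  "op_subset domA A domB B \<longleftrightarrow> domA \<subseteq> domB \<and> (\<forall>x\<in>domA. B x = A x)"

definition ginner :: "('a::complex_inner \<Rightarrow> 'b::complex_inner) \<Rightarrow> 'a \<Rightarrow> 'a \<Rightarrow> complex" where
  "ginner f x y = cinner x y + cinner (f x) (f y)"

definition gnorm :: "('a::complex_inner \<Rightarrow> 'b::complex_inner) \<Rightarrow> 'a \<Rightarrow> real" where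
  "gnorm f x = sqrt ((norm x)\<^sup>2 + (norm (f x))\<^sup>2)"

definition coercive :: "('a::complex_inner \<Rightarrow> 'a) \<Rightarrow> bool" where
  "coercive M \<longleftrightarrow> (\<exists>\<mu>>0. \<forall>x. Re (cinner (M x) x) \<ge> \<mu> * (norm x)\<^sup>2)"

text \<open>\<open>\<mathring>D = -G\<^sup>*\<close>, \<open>\<mathring>G = -D\<^sup>*\<close>.\<close>
definition Dc_dom :: "'a::complex_inner set \<Rightarrow> ('a \<Rightarrow> 'b::complex_inner) \<Rightarrow> 'b set" where
  "Dc_dom domG G = adj_dom domG G"
definition Dc :: "'a::complex_inner set \<Rightarrow> ('a \<Rightarrow> 'b::complex_inner) \<Rightarrow> 'b \<Rightarrow> 'a" where
  "Dc domG G y = - adj domG G y"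
definition Gc_dom :: "'b::complex_inner set \<Rightarrow> ('b \<Rightarrow> 'a::complex_inner) \<Rightarrow> 'a set" where
  "Gc_dom domD D = adj_dom domD D"
definition Gc :: "'b::complex_inner set \<Rightarrow> ('b \<Rightarrow> 'a::complex_inner) \<Rightarrow> 'a \<Rightarrow> 'b" where
  "Gc domD D x = - adj domD D x"

definition BD_G :: "'a::complex_inner set \<Rightarrow> ('a \<Rightarrow> 'b::complex_inner) \<Rightarrow> 'b set \<Rightarrow> ('b \<Rightarrow> 'a) \<Rightarrow> 'a set" where
  "BD_G domG G domD D = {x \<in> domG. \<forall>y\<in>Gc_dom domD D. ginner G x y = 0}"

definition BD_D :: "'a::complex_inner set \<Rightarrow> ('a \<Rightarrow> 'b::complex_inner) \<Rightarrow> 'b set \<Rightarrow> ('b \<Rightarrow> 'a) \<Rightarrow> 'b set" where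
  "BD_D domG G domD D = {y \<in> domD. \<forall>z\<in>Dc_dom domG G. ginner D y z = 0}"

definition gproj :: "'a set \<Rightarrow> ('a::complex_inner \<Rightarrow> 'b::complex_inner) \<Rightarrow> 'a \<Rightarrow> 'a" where
  "gproj S f v = (THE w. w \<in> S \<and> (\<forall>z\<in>S. ginner f (v - w) z = 0))"

definition kappa_adj :: "'a::complex_inner set \<Rightarrow> ('a \<Rightarrow> 'b::complex_inner) \<Rightarrow> 'b set \<Rightarrow> ('b \<Rightarrow> 'a)
    \<Rightarrow> ('a \<Rightarrow> 'c::complex_inner) \<Rightarrow> 'c \<Rightarrow> 'a" where
  "kappa_adj domG G domD D \<kappa> \<psi> =
     (THE f. f \<in> BD_G domG G domD D \<and> (\<forall>u\<in>BD_G domG G domD D. cinner (\<kappa> u) \<psi> = ginner G u f))"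

definition dir_sol :: "'a::complex_inner set \<Rightarrow> ('a \<Rightarrow> 'b::complex_inner) \<Rightarrow> 'b set \<Rightarrow> ('b \<Rightarrow> 'a)
    \<Rightarrow> ('b \<Rightarrow> 'b) \<Rightarrow> ('a \<Rightarrow> 'a) \<Rightarrow> 'a \<Rightarrow> 'a" where
  "dir_sol domG G domD D a m u0 =
     (THE u. u \<in> domG \<and> a (G u) \<in> domD \<and> m u - D (a (G u)) = 0 \<and> u - u0 \<in> Gc_dom domD D)"

definition DtN :: "'a::complex_inner set \<Rightarrow> ('a \<Rightarrow> 'b::complex_inner) \<Rightarrow> 'b set \<Rightarrow> ('b \<Rightarrow> 'a)
    \<Rightarrow> ('b \<Rightarrow> 'b) \<Rightarrow> ('a \<Rightarrow> 'a) \<Rightarrow> 'a \<Rightarrow> 'b" where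
  "DtN domG G domD D a m u0 =
     gproj (BD_D domG G domD D) D (a (G (dir_sol domG G domD D a m u0)))"

text \<open>The Dirichlet-to-Neumann operator \<open>\<Lambda>\<^sub>H\<close> in \<open>H\<close>, as a relation (graph): \<open>(\<phi>,\<psi>) \<in> \<Lambda>\<^sub>H\<close> iff
  \<open>\<phi> \<in> dom(\<Lambda>\<^sub>H)\<close> and \<open>\<Lambda>\<^sub>H \<phi> = \<psi>\<close>.\<close>
definition DtN_H :: "'a::complex_inner set \<Rightarrow> ('a \<Rightarrow> 'b::complex_inner) \<Rightarrow> 'b set \<Rightarrow> ('b \<Rightarrow> 'a)
    \<Rightarrow> ('b \<Rightarrow> 'b) \<Rightarrow> ('a \<Rightarrow> 'a) \<Rightarrow> ('a \<Rightarrow> 'c::complex_inner) \<Rightarrow> ('c \<times> 'c) set" where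
  "DtN_H domG G domD D a m \<kappa> =
     {(\<phi>, \<psi>). \<exists>u0\<in>BD_G domG G domD D. \<kappa> u0 = \<phi> \<and>
         DtN domG G domD D a m u0 = G (kappa_adj domG G domD D \<kappa> \<psi>)}"

definition block_dom :: "'a::complex_inner set \<Rightarrow> ('a \<Rightarrow> 'b::complex_inner) \<Rightarrow> ('a \<times> 'b) set" where
  "block_dom domG G = domG \<times> Dc_dom domG G"

definition block_op :: "'a::complex_inner set \<Rightarrow> ('a \<Rightarrow> 'b::complex_inner) \<Rightarrow> ('b \<Rightarrow> 'b) \<Rightarrow> ('a \<Rightarrow> 'a)
    \<Rightarrow> 'a \<times> 'b \<Rightarrow> 'a \<times> 'b" where
  "block_op domG G a m = (\<lambda>(u, q). (m u - Dc domG G q, - G u + inv a q))"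

definition block_inv :: "'a::complex_inner set \<Rightarrow> ('a \<Rightarrow> 'b::complex_inner) \<Rightarrow> ('b \<Rightarrow> 'b) \<Rightarrow> ('a \<Rightarrow> 'a)
    \<Rightarrow> 'a \<times> 'b \<Rightarrow> 'a \<times> 'b" where
  "block_inv domG G a m y = (THE x. x \<in> block_dom domG G \<and> block_op domG G a m x = y)"

end

theory Submission
  imports Defs
begin

text \<open>Lax--Milgram, applied to the coercive operator \<open>(u, Gu) \<mapsto> (mu, aGu)\<close> on graphs of restrictions
  of \<open>G\<close>, solves both the Dirichlet problem and the block system; uniqueness in both comes from
  coercivity, because the off-diagonal terms \<open>\<langle>G\<^sup>*q, u\<rangle>\<close> and \<open>\<langle>Gu, q\<rangle>\<close> cancel in the real part.
  Write \<open>\<pi>\<^sub>G\<close>, \<open>\<pi>\<^sub>D\<close> for the projections onto \<open>BD(G)\<close>, \<open>BD(D)\<close>. For \<open>f \<in> BD(G)\<close>, the first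
  component \<open>u\<close> of the block solution with right-hand side \<open>(f, -a\<^sup>-\<^sup>1Gf)\<close> satisfies \<open>aGu = q + Gf\<close>
  with \<open>q \<in> dom(\<mathring>D)\<close>. Hence \<open>u\<close> solves the Dirichlet problem with boundary value \<open>\<pi>\<^sub>Gu\<close>, and its
  Neumann datum is \<open>\<pi>\<^sub>D(aGu) = Gf\<close> because \<open>Gf \<in> BD(D)\<close>. With \<open>f = \<kappa>\<^sup>*\<psi>\<close> this says
  \<open>\<Lambda>(\<pi>\<^sub>Gu) = G\<kappa>\<^sup>*\<psi>\<close>, i.e. \<open>\<Lambda>\<^sub>H(\<kappa>\<pi>\<^sub>Gu) = \<psi>\<close>. Boundedness of \<open>\<Lambda>\<^sub>H\<^sup>-\<^sup>1\<close> comes from the coercivity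
  estimate for the block system, and its injectivity from \<open>DGf = f\<close> on \<open>BD(G)\<close> and the density of
  the range of \<open>\<kappa>\<close>.\<close>

lemma scaleC_zero_left [simp]: "scaleC 0 x = (0::'a::complex_vector)"
  using scaleR_scaleC[of 0 x] by simp

lemma scaleC_minus1_left: "scaleC (-1) x = - (x::'a::complex_vector)"
  using scaleR_scaleC[of "-1" x] by simp

lemma scaleC_zero_right [simp]: "scaleC c 0 = (0::'a::complex_vector)"
  using scaleC_add_right[of c 0 0] by simp

lemma scaleC_minus_right: "scaleC c (- x) = - scaleC c (x::'a::complex_vector)"
proof -
  have "scaleC c x + scaleC c (- x) = 0"
    using scaleC_add_right[of c x "- x"] by simp
  then show ?thesis by (simp add: minus_unique)
qed

lemma scaleC_diff_right: "scaleC c (x - y) = scaleC c x - scaleC c (y::'a::complex_vector)"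
  using scaleC_add_right[of c x "- y"] by (simp add: scaleC_minus_right)

lemma cinner_add_right: "cinner x (y + z) = cinner x y + cinner x (z::'a::complex_inner)"
  by (subst (1 2 3) cinner_commute) (simp add: cinner_add_left)

lemma cinner_scaleC_right: "cinner x (scaleC c y) = c * cinner x (y::'a::complex_inner)"
  by (subst (1 2) cinner_commute) (simp add: cinner_scaleC_left)

lemma cinner_zero_left [simp]: "cinner 0 y = (0::complex)"
  using cinner_add_left[of 0 0 y] by simp

lemma cinner_zero_right [simp]: "cinner x 0 = (0::complex)"
  by (subst cinner_commute) simp

lemma cinner_minus_left: "cinner (- x) y = - cinner x (y::'a::complex_inner)"
  using cinner_scaleC_left[of "-1" x y] by (simp add: scaleC_minus1_left)

lemma cinner_minus_right: "cinner x (- y) = - cinner x (y::'a::complex_inner)"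
  by (subst (1 2) cinner_commute) (simp add: cinner_minus_left)

lemma cinner_diff_left: "cinner (x - y) z = cinner x z - cinner y (z::'a::complex_inner)"
  using cinner_add_left[of x "- y" z] by (simp add: cinner_minus_left)

lemma cinner_diff_right: "cinner x (y - z) = cinner x y - cinner x (z::'a::complex_inner)"
  using cinner_add_right[of x y "- z"] by (simp add: cinner_minus_right)

lemmas cinner_simps = cinner_add_left cinner_add_right cinner_diff_left cinner_diff_right
  cinner_minus_left cinner_minus_right cinner_scaleC_left cinner_scaleC_right

declare cinner_eq_zero_iff [simp]

lemma Re_cinner_self: "Re (cinner x x) = (norm (x::'a::complex_inner))\<^sup>2"
  using cinner_nonneg[of x] norm_eq_sqrt_cinner[of x] by simp

lemma cinner_self: "cinner x x = complex_of_real ((norm (x::'a::complex_inner))\<^sup>2)"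
  using cinner_nonneg[of x] Re_cinner_self[of x] by (simp add: complex_eq_iff)

lemma Re_cinner_commute: "Re (cinner y x) = Re (cinner x (y::'a::complex_inner))"
  by (metis cinner_commute cnj.sel(1))

lemma cnj_mult_self: "cnj c * c = complex_of_real ((cmod c)\<^sup>2)"
  by (metis complex_norm_square mult.commute)

lemma norm_diff_scaleC_sq:
  "(norm (x - scaleC k y))\<^sup>2
     = (norm x)\<^sup>2 - 2 * Re (k * cinner x y) + (cmod k)\<^sup>2 * (norm (y::'a::complex_inner))\<^sup>2"
proof -
  have "cinner (x - scaleC k y) (x - scaleC k y) =
      cinner x x - k * cinner x y - cnj k * cinner y x + cnj k * k * cinner y y"
    by (simp add: cinner_simps algebra_simps)
  moreover have "Re (cnj k * cinner y x) = Re (k * cinner x y)"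
    by (metis cinner_commute complex_cnj_mult cnj.sel(1))
  moreover have "Re (cnj k * k * cinner y y) = (cmod k)\<^sup>2 * (norm y)\<^sup>2"
    unfolding cnj_mult_self cinner_self[of y] by (simp del: of_real_power)
  ultimately show ?thesis
    by (simp add: Re_cinner_self[symmetric])
qed

lemma cmod_cinner_le: "cmod (cinner x y) \<le> norm x * norm (y::'a::complex_inner)"
proof (cases "x = 0")
  case True
  then show ?thesis by simp
next
  case False
  then have nx: "norm x > 0" by simp
  define c where "c = cinner x y"
  define k where "k = c / complex_of_real ((norm x)\<^sup>2)"
  \<comment> \<open>expand \<open>0 \<le> \<parallel>y - k x\<parallel>\<^sup>2\<close> for the coefficient \<open>k\<close> of the projection of \<open>y\<close> onto \<open>x\<close>\<close>
  have "Re (k * cinner y x) = (cmod c)\<^sup>2 / (norm x)\<^sup>2"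
  proof -
    have "k * cinner y x = (cnj c * c) / complex_of_real ((norm x)\<^sup>2)"
      unfolding k_def c_def by (subst cinner_commute) simp
    then show ?thesis unfolding cnj_mult_self by (simp del: of_real_power add: of_real_divide)
  qed
  moreover have "(cmod k)\<^sup>2 * (norm x)\<^sup>2 = (cmod c)\<^sup>2 / (norm x)\<^sup>2"
    unfolding k_def norm_divide using nx by (simp del: of_real_power add: power_divide field_simps)
  ultimately have "(norm (y - scaleC k x))\<^sup>2 = (norm y)\<^sup>2 - (cmod c)\<^sup>2 / (norm x)\<^sup>2"
    using norm_diff_scaleC_sq[of y k x] by simp
  then have "(cmod c)\<^sup>2 / (norm x)\<^sup>2 \<le> (norm y)\<^sup>2"
    by (metis diff_ge_0_iff_ge zero_le_power2)
  then have "(cmod c)\<^sup>2 \<le> (norm x * norm y)\<^sup>2"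
    using nx by (simp add: field_simps power_mult_distrib)
  then show ?thesis
    unfolding c_def by (meson mult_nonneg_nonneg norm_ge_zero power2_le_imp_le)
qed

lemma norm_le_if_sq_le_cinner:
  fixes x y :: "'a::complex_inner"
  assumes "c * (norm x)\<^sup>2 \<le> Re (cinner y x)"
  shows "c * norm x \<le> norm y"
proof (cases "x = 0")
  case True
  then show ?thesis by simp
next
  case False
  have "c * norm x * norm x \<le> Re (cinner y x)"
    using assms by (simp add: power2_eq_square mult.assoc)
  also have "\<dots> \<le> cmod (cinner y x)" by (rule complex_Re_le_cmod)
  also have "\<dots> \<le> norm y * norm x" by (rule cmod_cinner_le)
  finally show ?thesis using False by simp
qed

lemma norm_add_sq:
  "(norm (x + y))\<^sup>2 = (norm x)\<^sup>2 + (norm y)\<^sup>2 + 2 * Re (cinner x (y::'a::complex_inner))"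
proof -
  have "cinner (x + y) (x + y) = cinner x x + cinner y y + cinner x y + cinner y x"
    by (simp add: cinner_simps)
  then show ?thesis by (simp add: Re_cinner_self[symmetric] Re_cinner_commute[of y x])
qed

lemma parallelogram_law:
  "(norm (x + y))\<^sup>2 + (norm (x - y))\<^sup>2 = 2 * (norm x)\<^sup>2 + 2 * (norm (y::'a::complex_inner))\<^sup>2"
  using norm_add_sq[of x y] norm_add_sq[of x "- y"] by (simp add: cinner_minus_right)

lemma norm_diff_midpoint_sq:
  fixes v s t :: "'a::complex_inner"
  shows "(norm (s - t))\<^sup>2
    = 2 * (norm (v - s))\<^sup>2 + 2 * (norm (v - t))\<^sup>2 - 4 * (norm (v - scaleR (1/2) (s + t)))\<^sup>2"
proof -
  have "(v - s) + (v - t) = scaleR 2 (v - scaleR (1/2) (s + t))"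
    by (simp add: algebra_simps scaleR_2)
  then have "(norm ((v - s) + (v - t)))\<^sup>2 = 4 * (norm (v - scaleR (1/2) (s + t)))\<^sup>2"
    by (simp add: power_mult_distrib)
  moreover have "(norm ((v - s) - (v - t)))\<^sup>2 = (norm (s - t))\<^sup>2"
    by (simp add: norm_minus_commute)
  ultimately show ?thesis
    using parallelogram_law[of "v - s" "v - t"] by linarith
qed

instantiation prod :: (complex_vector, complex_vector) complex_vector
begin

definition scaleC_prod_def: "scaleC c x = (scaleC c (fst x), scaleC c (snd x))"

instance
  by standard (auto simp: scaleC_prod_def scaleC_add_right scaleC_add_left scaleC_scaleC
      scaleR_prod_def scaleR_scaleC scaleC_one)

end

instantiation prod :: (complex_inner, complex_inner) complex_inner
begin

definition cinner_prod_def: "cinner x y = cinner (fst x) (fst y) + cinner (snd x) (snd y)"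

instance
proof
  fix x y z :: "'a \<times> 'b" and c :: complex
  show "cinner x y = cnj (cinner y x)"
    unfolding cinner_prod_def by (metis cinner_commute complex_cnj_add)
  show "cinner (x + y) z = cinner x z + cinner y z"
    unfolding cinner_prod_def by (simp add: cinner_add_left)
  show "cinner (scaleC c x) y = cnj c * cinner x y"
    unfolding cinner_prod_def scaleC_prod_def by (simp add: cinner_scaleC_left algebra_simps)
  show "Im (cinner x x) = 0 \<and> 0 \<le> Re (cinner x x)"
    unfolding cinner_prod_def by (simp add: cinner_self)
  show "(cinner x x = 0) = (x = 0)"
  proof -
    obtain p q where x: "x = (p, q)" by fastforce
    have "cinner x x = complex_of_real ((norm p)\<^sup>2 + (norm q)\<^sup>2)"
      unfolding x cinner_prod_def cinner_self by (simp only: fst_conv snd_conv of_real_add)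
    then have "(cinner x x = 0) = ((norm p)\<^sup>2 + (norm q)\<^sup>2 = 0)" by (simp only: of_real_eq_0_iff)
    also have "\<dots> = (p = 0 \<and> q = 0)" by (simp add: add_nonneg_eq_0_iff)
    finally show ?thesis by (simp add: x zero_prod_def)
  qed
  show "norm x = sqrt (Re (cinner x x))"
    unfolding cinner_prod_def by (simp add: Re_cinner_self norm_prod_def)
qed

end

instance prod :: (chilbert_space, chilbert_space) chilbert_space ..

lemma scaleC_Pair [simp]: "scaleC c (x, y) = (scaleC c x, scaleC c y)"
  by (simp add: scaleC_prod_def)

lemma cinner_Pair: "cinner (a, b) (c, d) = cinner a c + cinner b d"
  by (simp add: cinner_prod_def)

lemma bounded_bilinear_cinner: "bounded_bilinear (cinner :: 'a::complex_inner \<Rightarrow> 'a \<Rightarrow> complex)"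
proof
  fix a a' b b' :: 'a and r :: real
  show "cinner (a + a') b = cinner a b + cinner a' b" by (rule cinner_add_left)
  show "cinner a (b + b') = cinner a b + cinner a b'" by (rule cinner_add_right)
  show "cinner (r *\<^sub>R a) b = r *\<^sub>R cinner a b"
    by (simp add: scaleR_scaleC cinner_scaleC_left scaleR_conv_of_real)
  show "cinner a (r *\<^sub>R b) = r *\<^sub>R cinner a b"
    by (simp add: scaleR_scaleC cinner_scaleC_right scaleR_conv_of_real)
  show "\<exists>K. \<forall>a b. norm (cinner a b) \<le> norm a * norm b * K"
    by (rule exI[of _ 1]) (simp add: cmod_cinner_le)
qed

lemmas tendsto_cinner = bounded_bilinear.tendsto[OF bounded_bilinear_cinner]

lemma continuous_on_cinner [continuous_intros]:
  "continuous_on S f \<Longrightarrow> continuous_on S g \<Longrightarrow> continuous_on S (\<lambda>x. cinner (f x) (g x))"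
  by (rule bounded_bilinear.continuous_on[OF bounded_bilinear_cinner])

lemma orthogonal_dense_eq_0:
  fixes S :: "'a::complex_inner set"
  assumes dense: "closure S = UNIV" and orth: "\<And>x. x \<in> S \<Longrightarrow> cinner x z = 0"
  shows "z = 0"
proof -
  have "closed {x. cinner x z = 0}"
    by (rule closed_Collect_eq) (auto intro!: continuous_intros)
  moreover have "S \<subseteq> {x. cinner x z = 0}"
    using orth by blast
  ultimately have "closure S \<subseteq> {x. cinner x z = 0}"
    by (rule closure_minimal[rotated])
  then have "z \<in> {x. cinner x z = 0}"
    using dense by blast
  then show ?thesis by simp
qed

lemma csubspace_0: "csubspace S \<Longrightarrow> 0 \<in> S"
  by (simp add: csubspace_def)

lemma csubspace_add: "csubspace S \<Longrightarrow> x \<in> S \<Longrightarrow> y \<in> S \<Longrightarrow> x + y \<in> S"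
  by (simp add: csubspace_def)

lemma csubspace_scaleC: "csubspace S \<Longrightarrow> x \<in> S \<Longrightarrow> scaleC c x \<in> S"
  by (simp add: csubspace_def)

lemma csubspace_scaleR: "csubspace S \<Longrightarrow> x \<in> S \<Longrightarrow> scaleR r x \<in> S"
  by (simp add: csubspace_def scaleR_scaleC)

lemma csubspace_minus: "csubspace S \<Longrightarrow> x \<in> S \<Longrightarrow> - x \<in> S"
  by (metis csubspace_scaleC scaleC_minus1_left)

lemma csubspace_diff: "csubspace S \<Longrightarrow> x \<in> S \<Longrightarrow> y \<in> S \<Longrightarrow> x - y \<in> S"
  using csubspace_add[of S x "- y"] csubspace_minus[of S y] by simp

lemma csubspace_UNIV: "csubspace UNIV"
  by (simp add: csubspace_def)

lemma clinear_on_csubspace: "clinear_on S f \<Longrightarrow> csubspace S"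
  by (simp add: clinear_on_def)

lemma clinear_on_add: "clinear_on S f \<Longrightarrow> x \<in> S \<Longrightarrow> y \<in> S \<Longrightarrow> f (x + y) = f x + f y"
  by (simp add: clinear_on_def)

lemma clinear_on_scaleC: "clinear_on S f \<Longrightarrow> x \<in> S \<Longrightarrow> f (scaleC c x) = scaleC c (f x)"
  by (simp add: clinear_on_def)

lemma clinear_on_0: "clinear_on S f \<Longrightarrow> f 0 = 0"
  using clinear_on_scaleC[of S f 0 0] csubspace_0[OF clinear_on_csubspace] by auto

lemma clinear_on_diff: "clinear_on S f \<Longrightarrow> x \<in> S \<Longrightarrow> y \<in> S \<Longrightarrow> f (x - y) = f x - f y"
  using clinear_on_add[of S f "x - y" y] csubspace_diff[OF clinear_on_csubspace] by fastforce

lemma clinear_on_subset: "clinear_on T f \<Longrightarrow> S \<subseteq> T \<Longrightarrow> csubspace S \<Longrightarrow> clinear_on S f"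
  unfolding clinear_on_def by blast

lemma csubspace_graph: "clinear_on S f \<Longrightarrow> csubspace {(x, f x) | x. x \<in> S}"
  using clinear_on_0[of S f] unfolding clinear_on_def csubspace_def zero_prod_def
  by (auto intro!: exI)

lemma bounded_clinear_op_clinear: "bounded_clinear_op f \<Longrightarrow> clinear_on UNIV f"
  by (simp add: bounded_clinear_op_def)

lemma bounded_clinear_op_bound:
  assumes "bounded_clinear_op f"
  obtains K where "K \<ge> 0" "\<And>x. norm (f x) \<le> K * norm x"
proof -
  obtain K where K: "\<And>x. norm (f x) \<le> K * norm x"
    using assms by (auto simp: bounded_clinear_op_def)
  have "norm (f x) \<le> max K 0 * norm x" for x
    using K[of x] by (meson max.cobounded1 mult_right_mono norm_ge_zero order_trans)
  then show thesis by (rule that[rotated]) simp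
qed

lemma bounded_clinear_opI:
  assumes "\<And>x y. f (x + y) = f x + f y" "\<And>c x. f (scaleC c x) = scaleC c (f x)"
    and "\<And>x. norm (f x) \<le> K * norm x"
  shows "bounded_clinear_op f"
  using assms unfolding bounded_clinear_op_def clinear_on_def by (auto simp: csubspace_UNIV)

lemma bounded_clinear_op_add: "bounded_clinear_op f \<Longrightarrow> f (x + y) = f x + f y"
  using clinear_on_add[OF bounded_clinear_op_clinear] by simp

lemma bounded_clinear_op_scaleC: "bounded_clinear_op f \<Longrightarrow> f (scaleC c x) = scaleC c (f x)"
  using clinear_on_scaleC[OF bounded_clinear_op_clinear] by simp

lemma bounded_clinear_op_diff: "bounded_clinear_op f \<Longrightarrow> f (x - y) = f x - f y"
  using clinear_on_diff[OF bounded_clinear_op_clinear] by simp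

lemma bounded_clinear_op_0: "bounded_clinear_op f \<Longrightarrow> f 0 = 0"
  using clinear_on_0[OF bounded_clinear_op_clinear] .

lemma bounded_clinear_op_tendsto:
  assumes f: "bounded_clinear_op f" and X: "X \<longlonglongrightarrow> x"
  shows "(\<lambda>n. f (X n)) \<longlonglongrightarrow> f x"
proof -
  obtain K where K: "\<And>x. norm (f x) \<le> K * norm x"
    using bounded_clinear_op_bound[OF f] by blast
  show ?thesis
  proof (rule LIM_zero_cancel, rule Lim_null_comparison)
    show "\<forall>\<^sub>F n in sequentially. norm (f (X n) - f x) \<le> K * norm (X n - x)"
      using K by (simp add: bounded_clinear_op_diff[OF f, symmetric])
    have "(\<lambda>n. K * norm (X n - x)) \<longlonglongrightarrow> K * norm (x - x)"
      by (intro tendsto_intros X)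
    then show "(\<lambda>n. K * norm (X n - x)) \<longlonglongrightarrow> 0" by simp
  qed
qed

section \<open>Orthogonal projection, Riesz representation and Lax--Milgram\<close>

lemma Cauchy_if_norm_diff_sq_le:
  fixes s :: "nat \<Rightarrow> 'a::real_normed_vector"
  assumes C: "0 < C"
    and le: "\<And>n k. (norm (s n - s k))\<^sup>2 \<le> C * (inverse (real (Suc n)) + inverse (real (Suc k)))"
  shows "Cauchy s"
proof (rule CauchyI)
  fix r :: real
  assume r: "0 < r"
  then obtain M where M: "inverse (real (Suc M)) < r\<^sup>2 / (2 * C)"
    using reals_Archimedean[of "r\<^sup>2 / (2 * C)"] C by auto
  have "norm (s m - s n) < r" if "M \<le> m" "M \<le> n" for m n
  proof -
    have "inverse (real (Suc m)) \<le> inverse (real (Suc M))" "inverse (real (Suc n)) \<le> inverse (real (Suc M))"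
      using that by (simp_all add: le_imp_inverse_le)
    then have "inverse (real (Suc m)) + inverse (real (Suc n)) \<le> 2 * inverse (real (Suc M))"
      by linarith
    then have "(norm (s m - s n))\<^sup>2 \<le> C * (2 * inverse (real (Suc M)))"
      using le[of m n] C by (meson mult_left_mono less_imp_le order_trans)
    also have "\<dots> < r\<^sup>2"
      using M C by (simp add: field_simps)
    finally show ?thesis
      using r by (simp add: power2_less_imp_less)
  qed
  then show "\<exists>M. \<forall>m\<ge>M. \<forall>n\<ge>M. norm (s m - s n) < r" by blast
qed

lemma Cauchy_minimizing_sequence:
  fixes S :: "'a::complex_inner set"
  assumes sub: "csubspace S" and sS: "\<And>n. s n \<in> S" and d0: "0 \<le> d"
    and d_le: "\<And>t. t \<in> S \<Longrightarrow> d \<le> norm (v - t)"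
    and near: "\<And>n. norm (v - s n) < d + inverse (real (Suc n))"
  shows "Cauchy s"
proof -
  define e where "e n = inverse (real (Suc n))" for n
  have e0: "0 < e n" and e1: "e n \<le> 1" for n
    unfolding e_def by (auto simp: field_simps)
  define c where "c = 2 * d + 1"
  have sq: "(norm (v - s n))\<^sup>2 \<le> d\<^sup>2 + c * e n" for n
  proof -
    have "(norm (v - s n))\<^sup>2 \<le> (d + e n)\<^sup>2"
      using near[of n] unfolding e_def by (intro power_mono) auto
    also have "\<dots> \<le> d\<^sup>2 + 2 * d * e n + e n"
      using e0[of n] e1[of n] by (simp add: power2_eq_square algebra_simps mult_le_cancel_left1)
    finally show ?thesis unfolding c_def by (simp add: algebra_simps)
  qed
  \<comment> \<open>the midpoint of \<open>s n\<close> and \<open>s k\<close> lies in \<open>S\<close>, hence is at distance at least \<open>d\<close> from \<open>v\<close>\<close>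
  have "(norm (s n - s k))\<^sup>2 \<le> (2 * c) * (e n + e k)" for n k
  proof -
    have "scaleR (1/2) (s n + s k) \<in> S"
      using sS sub by (simp add: csubspace_add csubspace_scaleR)
    then have "d\<^sup>2 \<le> (norm (v - scaleR (1/2) (s n + s k)))\<^sup>2"
      using d_le d0 by (intro power_mono) auto
    then have "(norm (s n - s k))\<^sup>2 \<le> 2 * (d\<^sup>2 + c * e n) + 2 * (d\<^sup>2 + c * e k) - 4 * d\<^sup>2"
      using norm_diff_midpoint_sq[of "s n" "s k" v] sq[of n] sq[of k] by (smt (verit))
    also have "\<dots> = (2 * c) * (e n + e k)" by (simp add: algebra_simps)
    finally show ?thesis .
  qed
  then show ?thesis
    using d0 unfolding c_def e_def by (intro Cauchy_if_norm_diff_sq_le) auto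
qed

lemma nearest_point_exists:
  fixes S :: "'a::chilbert_space set"
  assumes sub: "csubspace S" and cl: "closed S"
  shows "\<exists>w\<in>S. \<forall>t\<in>S. norm (v - w) \<le> norm (v - t)"
proof -
  define d where "d = (INF t\<in>S. norm (v - t))"
  have ne: "S \<noteq> {}" using csubspace_0[OF sub] by blast
  have d_le: "d \<le> norm (v - t)" if "t \<in> S" for t
    unfolding d_def using that by (intro cINF_lower bdd_belowI[of _ 0]) auto
  have d0: "0 \<le> d"
    unfolding d_def using ne by (intro cINF_greatest) auto
  have "\<exists>t\<in>S. norm (v - t) < d + inverse (real (Suc n))" for n
  proof -
    have "Inf ((\<lambda>t. norm (v - t)) ` S) < d + inverse (real (Suc n))"
      unfolding d_def by simp
    from cInf_lessD[OF _ this] ne show ?thesis by auto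
  qed
  then obtain s where sS: "\<And>n. s n \<in> S"
    and near: "\<And>n. norm (v - s n) < d + inverse (real (Suc n))"
    by metis
  obtain w where sw: "s \<longlonglongrightarrow> w"
    using Cauchy_minimizing_sequence[OF sub sS d0 d_le near] Cauchy_convergent convergent_def by blast
  have "norm (v - w) \<le> d"
  proof (rule LIMSEQ_le)
    show "(\<lambda>n. norm (v - s n)) \<longlonglongrightarrow> norm (v - w)"
      by (intro tendsto_intros sw)
    show "(\<lambda>n. d + inverse (real (Suc n))) \<longlonglongrightarrow> d"
      using LIMSEQ_inverse_real_of_nat by (metis add.right_neutral tendsto_add_const_iff)
    show "\<exists>N. \<forall>n\<ge>N. norm (v - s n) \<le> d + inverse (real (Suc n))"
      using near less_imp_le by blast
  qed
  moreover have "w \<in> S"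
    by (rule closed_sequentially[OF cl sS sw])
  ultimately show ?thesis
    using d_le by force
qed

lemma nearest_point_orthogonal:
  fixes S :: "'a::complex_inner set"
  assumes sub: "csubspace S" and w: "w \<in> S" and z: "z \<in> S"
    and nearest: "\<And>t. t \<in> S \<Longrightarrow> norm (v - w) \<le> norm (v - t)"
  shows "cinner (v - w) z = 0"
proof -
  define c where "c = cinner (v - w) z"
  define \<epsilon> where "\<epsilon> = 1 / ((norm z)\<^sup>2 + 1)"
  have \<epsilon>: "0 < \<epsilon>" "\<epsilon> * (norm z)\<^sup>2 \<le> 1"
    unfolding \<epsilon>_def by (auto simp: field_simps add_pos_nonneg)
  \<comment> \<open>compare with the competitor \<open>w + k z\<close> for a small multiple \<open>k\<close> of \<open>cnj c\<close>\<close>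
  define k where "k = complex_of_real \<epsilon> * cnj c"
  have "w + scaleC k z \<in> S"
    using w z sub by (simp add: csubspace_add csubspace_scaleC)
  then have "(norm (v - w))\<^sup>2 \<le> (norm ((v - w) - scaleC k z))\<^sup>2"
    using nearest by (simp add: algebra_simps power_mono)
  also have "\<dots> = (norm (v - w))\<^sup>2 - 2 * Re (k * c) + (cmod k)\<^sup>2 * (norm z)\<^sup>2"
    unfolding c_def by (rule norm_diff_scaleC_sq)
  also have "Re (k * c) = \<epsilon> * (cmod c)\<^sup>2"
    unfolding k_def by (simp add: mult.assoc cnj_mult_self del: of_real_power)
  also have "(cmod k)\<^sup>2 = \<epsilon>\<^sup>2 * (cmod c)\<^sup>2"
    unfolding k_def using \<epsilon> by (simp add: norm_mult power_mult_distrib)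
  finally have "2 * \<epsilon> * (cmod c)\<^sup>2 \<le> \<epsilon> * ((\<epsilon> * (norm z)\<^sup>2) * (cmod c)\<^sup>2)"
    by (simp add: power2_eq_square algebra_simps)
  then have "2 * (cmod c)\<^sup>2 \<le> (\<epsilon> * (norm z)\<^sup>2) * (cmod c)\<^sup>2"
    using \<epsilon> by (simp add: mult.assoc)
  also have "\<dots> \<le> (cmod c)\<^sup>2"
    using \<epsilon> mult_right_mono[of _ 1 "(cmod c)\<^sup>2"] by simp
  finally show ?thesis
    unfolding c_def by simp
qed

lemma orthogonal_projection_exists:
  fixes S :: "'a::chilbert_space set"
  assumes "csubspace S" and "closed S"
  shows "\<exists>w\<in>S. \<forall>z\<in>S. cinner (v - w) z = 0"
  using nearest_point_exists[OF assms, of v] nearest_point_orthogonal[OF assms(1)] by metis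

lemma csubspace_eq_UNIV_if_orthogonal:
  fixes S :: "'a::chilbert_space set"
  assumes sub: "csubspace S" and cl: "closed S"
    and orth: "\<And>y. \<forall>z\<in>S. cinner y z = 0 \<Longrightarrow> y = 0"
  shows "S = UNIV"
proof -
  have "v \<in> S" for v
  proof -
    obtain w where "w \<in> S" "\<forall>z\<in>S. cinner (v - w) z = 0"
      using orthogonal_projection_exists[OF sub cl] by blast
    with orth[of "v - w"] show ?thesis by simp
  qed
  then show ?thesis by blast
qed

lemma closed_zero_set_if_Lipschitz:
  fixes l :: "'a::metric_space \<Rightarrow> 'b::real_normed_vector"
  assumes cl: "closed S" and lip: "\<And>x y. x \<in> S \<Longrightarrow> y \<in> S \<Longrightarrow> norm (l x - l y) \<le> K * dist x y"
  shows "closed {x \<in> S. l x = 0}"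
proof -
  have "(max K 0)-lipschitz_on S l"
  proof (rule lipschitz_onI)
    fix x y assume "x \<in> S" "y \<in> S"
    then show "dist (l x) (l y) \<le> max K 0 * dist x y"
      using lip by (simp add: dist_norm) (meson max.cobounded1 mult_right_mono zero_le_dist order_trans)
  qed simp
  then show ?thesis
    by (intro continuous_closed_preimage_constant lipschitz_on_continuous_on cl)
qed

lemma riesz_representation_csubspace:
  fixes S :: "'a::chilbert_space set" and l :: "'a \<Rightarrow> complex"
  assumes sub: "csubspace S" and cl: "closed S"
    and l_add: "\<And>x y. x \<in> S \<Longrightarrow> y \<in> S \<Longrightarrow> l (x + y) = l x + l y"
    and l_scaleC: "\<And>c x. x \<in> S \<Longrightarrow> l (scaleC c x) = c * l x"
    and l_bound: "\<And>x. x \<in> S \<Longrightarrow> cmod (l x) \<le> K * norm x"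
  shows "\<exists>F\<in>S. \<forall>u\<in>S. l u = cinner F u"
proof (cases "\<forall>x\<in>S. l x = 0")
  case True
  then show ?thesis using csubspace_0[OF sub] by (intro bexI[of _ 0]) auto
next
  case False
  then obtain x0 where x0: "x0 \<in> S" "l x0 \<noteq> 0" by auto
  have l0: "l 0 = 0" using l_scaleC[OF x0(1), of 0] by simp
  have l_diff: "l (x - y) = l x - l y" if "x \<in> S" "y \<in> S" for x y
    using l_add[of "x - y" y] csubspace_diff[OF sub that] that by simp
  define N where "N = {x\<in>S. l x = 0}"
  have sub_N: "csubspace N"
    unfolding csubspace_def N_def using sub l0 l_add l_scaleC by (auto simp: csubspace_def)
  have cl_N: "closed N"
    unfolding N_def
  proof (rule closed_zero_set_if_Lipschitz[OF cl])
    fix x y assume xy: "x \<in> S" "y \<in> S"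
    then show "norm (l x - l y) \<le> K * dist x y"
      using l_bound[OF csubspace_diff[OF sub xy]] l_diff[OF xy] by (simp add: dist_norm)
  qed
  \<comment> \<open>the component of \<open>x0\<close> orthogonal to the kernel spans its complement\<close>
  obtain w where w: "w \<in> N" and w_orth: "\<forall>z\<in>N. cinner (x0 - w) z = 0"
    using orthogonal_projection_exists[OF sub_N cl_N] by blast
  define z1 where "z1 = x0 - w"
  have z1: "z1 \<in> S" "l z1 = l x0"
    using x0 w csubspace_diff[OF sub] l_diff unfolding z1_def N_def by auto
  define nn where "nn = cinner z1 z1"
  have nn0: "nn \<noteq> 0"
    unfolding nn_def using z1 x0 l0 by auto
  define F where "F = scaleC (cnj (l z1 / nn)) z1"
  have "l u = cinner F u" if u: "u \<in> S" for u
  proof -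
    define u' where "u' = u - scaleC (l u / l z1) z1"
    have u': "u' \<in> S"
      unfolding u'_def using u z1 sub by (simp add: csubspace_diff csubspace_scaleC)
    have "l u' = 0"
      unfolding u'_def using l_diff[OF u csubspace_scaleC[OF sub z1(1)]] l_scaleC[OF z1(1)] z1 x0
      by simp
    then have "cinner z1 u' = 0"
      using w_orth u' unfolding z1_def N_def by blast
    then have "cinner z1 u = (l u / l z1) * nn"
      unfolding u'_def nn_def by (simp add: cinner_simps)
    then show ?thesis
      unfolding F_def using nn0 z1 x0 by (simp add: cinner_scaleC_left)
  qed
  moreover have "F \<in> S"
    unfolding F_def using z1 sub by (simp add: csubspace_scaleC)
  ultimately show ?thesis by blast
qed

locale coercive_on_csubspace =
  fixes S :: "'a::chilbert_space set" and M :: "'a \<Rightarrow> 'a" and \<mu> :: real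
  assumes csubspace: "csubspace S" and closed: "closed S"
    and bounded: "bounded_clinear_op M"
    and pos: "0 < \<mu>" and coercive: "\<And>x. x \<in> S \<Longrightarrow> \<mu> * (norm x)\<^sup>2 \<le> Re (cinner (M x) x)"
begin

definition weakly_solvable :: "'a \<Rightarrow> bool" where
  "weakly_solvable Y \<longleftrightarrow> (\<exists>X\<in>S. \<forall>V\<in>S. cinner (M X - Y) V = 0)"

lemma csubspace_weakly_solvable: "csubspace (Collect weakly_solvable)"
  unfolding csubspace_def weakly_solvable_def
proof (intro conjI ballI allI; clarsimp)
  show "\<exists>X\<in>S. \<forall>V\<in>S. cinner (M X) V = 0"
    using csubspace_0[OF csubspace] bounded_clinear_op_0[OF bounded] by force
next
  fix X1 X2 Y1 Y2
  assume X: "X1 \<in> S" "\<forall>V\<in>S. cinner (M X1 - Y1) V = 0" "X2 \<in> S" "\<forall>V\<in>S. cinner (M X2 - Y2) V = 0"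
  have "M (X1 + X2) - (Y1 + Y2) = (M X1 - Y1) + (M X2 - Y2)"
    by (simp add: bounded_clinear_op_add[OF bounded])
  then show "\<exists>X\<in>S. \<forall>V\<in>S. cinner (M X - (Y1 + Y2)) V = 0"
    using X csubspace_add[OF csubspace] by (metis cinner_add_left add_0)
next
  fix c X Y
  assume X: "X \<in> S" "\<forall>V\<in>S. cinner (M X - Y) V = 0"
  have "M (scaleC c X) - scaleC c Y = scaleC c (M X - Y)"
    by (simp add: bounded_clinear_op_scaleC[OF bounded] scaleC_diff_right)
  then show "\<exists>X\<in>S. \<forall>V\<in>S. cinner (M X - scaleC c Y) V = 0"
    using X csubspace_scaleC[OF csubspace] by (metis cinner_scaleC_left mult_zero_right)
qed

lemma norm_diff_weak_solutions_le:
  assumes X1: "X1 \<in> S" "\<forall>V\<in>S. cinner (M X1 - Y1) V = 0"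
    and X2: "X2 \<in> S" "\<forall>V\<in>S. cinner (M X2 - Y2) V = 0"
  shows "\<mu> * norm (X1 - X2) \<le> norm (Y1 - Y2)"
proof -
  define E where "E = X1 - X2"
  have E: "E \<in> S"
    unfolding E_def using X1 X2 csubspace_diff[OF csubspace] by blast
  have "cinner ((M X1 - Y1) - (M X2 - Y2)) E = 0"
    using X1 X2 E by (simp add: cinner_diff_left)
  moreover have "(M X1 - Y1) - (M X2 - Y2) = M E - (Y1 - Y2)"
    unfolding E_def bounded_clinear_op_diff[OF bounded] by simp
  ultimately have "cinner (M E) E = cinner (Y1 - Y2) E"
    by (simp add: cinner_diff_left)
  then have "\<mu> * (norm E)\<^sup>2 \<le> Re (cinner (Y1 - Y2) E)"
    using coercive[OF E] by simp
  then show ?thesis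
    unfolding E_def by (rule norm_le_if_sq_le_cinner)
qed

lemma closed_weakly_solvable: "closed (Collect weakly_solvable)"
  unfolding closed_sequential_limits
proof (intro allI impI, elim conjE)
  fix Ys Y
  assume Ys: "\<forall>n. Ys n \<in> Collect weakly_solvable" and lim: "Ys \<longlonglongrightarrow> Y"
  obtain Xs where XS: "\<And>n. Xs n \<in> S" and Xs: "\<And>n. \<forall>V\<in>S. cinner (M (Xs n) - Ys n) V = 0"
    using Ys unfolding weakly_solvable_def mem_Collect_eq by metis
  have "Cauchy Xs"
  proof (rule CauchyI)
    fix r :: real assume r: "0 < r"
    obtain N where N: "\<forall>m\<ge>N. \<forall>n\<ge>N. norm (Ys m - Ys n) < \<mu> * r"
      using CauchyD[OF LIMSEQ_imp_Cauchy[OF lim], of "\<mu> * r"] r pos by auto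
    have "norm (Xs m - Xs n) < r" if "N \<le> m" "N \<le> n" for m n
      using norm_diff_weak_solutions_le[OF XS Xs XS Xs, of m n] N that pos
      by (smt (verit) mult_less_cancel_left_pos)
    then show "\<exists>N. \<forall>m\<ge>N. \<forall>n\<ge>N. norm (Xs m - Xs n) < r" by blast
  qed
  then obtain X where X: "Xs \<longlonglongrightarrow> X"
    using Cauchy_convergent convergent_def by blast
  have MX: "(\<lambda>n. M (Xs n)) \<longlonglongrightarrow> M X"
    by (rule bounded_clinear_op_tendsto[OF bounded X])
  have "cinner (M X - Y) V = 0" if V: "V \<in> S" for V
  proof -
    have "(\<lambda>n. cinner (M (Xs n) - Ys n) V) \<longlonglongrightarrow> cinner (M X - Y) V"
      by (intro tendsto_cinner tendsto_diff MX lim tendsto_const)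
    moreover have "(\<lambda>n. cinner (M (Xs n) - Ys n) V) = (\<lambda>n. 0)"
      using Xs V by auto
    ultimately have "(\<lambda>n. 0::complex) \<longlonglongrightarrow> cinner (M X - Y) V"
      by simp
    from LIMSEQ_unique[OF tendsto_const this] show ?thesis by simp
  qed
  moreover have "X \<in> S"
    by (rule closed_sequentially[OF closed XS X])
  ultimately show "Y \<in> Collect weakly_solvable"
    unfolding weakly_solvable_def by blast
qed

lemma weakly_solvable_orthogonal_eq_0:
  assumes orth: "\<forall>Z\<in>Collect weakly_solvable. cinner y Z = 0"
  shows "y = 0"
proof -
  obtain w where w: "w \<in> S" and w_orth: "\<forall>z\<in>S. cinner (y - w) z = 0"
    using orthogonal_projection_exists[OF csubspace closed] by blast
  \<comment> \<open>both \<open>y - w\<close> (solved by \<open>0\<close>) and \<open>M w\<close> (solved by \<open>w\<close>) are weakly solvable\<close>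
  have "weakly_solvable (y - w)"
    unfolding weakly_solvable_def using w_orth csubspace_0[OF csubspace]
    by (intro bexI[of _ 0])
      (simp_all only: bounded_clinear_op_0[OF bounded] diff_0 cinner_minus_left, simp)
  then have "cinner y (y - w) = 0"
    using orth by blast
  moreover have "cinner w (y - w) = 0"
    using w_orth w cinner_commute[of w "y - w"] by simp
  ultimately have "cinner (y - w) (y - w) = 0"
    by (simp add: cinner_diff_left)
  then have yw: "y = w" by simp
  have "weakly_solvable (M w)"
    unfolding weakly_solvable_def using w by (intro bexI[of _ w]) simp_all
  then have "cinner (M w) w = 0"
    using orth yw cinner_commute[of "M w" w] by simp
  then have "\<mu> * (norm w)\<^sup>2 \<le> 0"
    using coercive[OF w] by simp
  then show ?thesis
    using pos yw by (simp add: mult_le_0_iff)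
qed

theorem lax_milgram: "\<exists>X\<in>S. \<forall>V\<in>S. cinner (M X - Y) V = 0"
proof -
  have "Collect weakly_solvable = UNIV"
    using csubspace_weakly_solvable closed_weakly_solvable weakly_solvable_orthogonal_eq_0
    by (rule csubspace_eq_UNIV_if_orthogonal) blast
  then show ?thesis
    unfolding weakly_solvable_def by blast
qed

end

locale bounded_coercive =
  fixes M :: "'a::chilbert_space \<Rightarrow> 'a"
  assumes bounded: "bounded_clinear_op M" and coercive: "coercive M"
begin

lemma weak_solution_exists:
  assumes "csubspace S" "closed S"
  shows "\<exists>X\<in>S. \<forall>V\<in>S. cinner (M X - Y) V = 0"
proof -
  obtain \<mu> where "\<mu> > 0" "\<And>x. \<mu> * (norm x)\<^sup>2 \<le> Re (cinner (M x) x)"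
    using coercive unfolding coercive_def by blast
  then interpret coercive_on_csubspace S M \<mu>
    using assms bounded by unfold_locales auto
  show ?thesis by (rule lax_milgram)
qed

lemma Re_cinner_nonneg: "0 \<le> Re (cinner (M x) x)"
  using coercive unfolding coercive_def
  by (meson order_trans zero_le_mult_iff zero_le_power2 less_imp_le)

lemma eq_0_if_Re_cinner_nonpos:
  assumes "Re (cinner (M x) x) \<le> 0"
  shows "x = 0"
proof -
  obtain \<mu> where "\<mu> > 0" "\<mu> * (norm x)\<^sup>2 \<le> Re (cinner (M x) x)"
    using coercive unfolding coercive_def by blast
  then have "\<mu> * (norm x)\<^sup>2 \<le> 0"
    using assms by linarith
  then show ?thesis
    using \<open>\<mu> > 0\<close> by (simp add: mult_le_0_iff)
qed

lemma bij: "bij M"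
proof (rule bijI)
  show "inj M"
  proof (rule injI)
    fix x y assume "M x = M y"
    then have "M (x - y) = 0"
      by (simp add: bounded_clinear_op_diff[OF bounded])
    then show "x = y"
      using eq_0_if_Re_cinner_nonpos[of "x - y"] by simp
  qed
  have "y \<in> range M" for y
  proof -
    obtain X where "\<forall>V\<in>UNIV. cinner (M X - y) V = 0"
      using weak_solution_exists[OF csubspace_UNIV closed_UNIV] by blast
    then have "cinner (M X - y) (M X - y) = 0"
      by blast
    then have "M X = y"
      by simp
    then show ?thesis by blast
  qed
  then show "surj M" by blast
qed

lemma apply_inv: "M (inv M y) = y"
  using bij by (simp add: bij_is_surj surj_f_inv_f)

lemma inv_apply: "inv M (M x) = x"
  using bij by (simp add: bij_is_inj inv_f_f)

lemma inv_add: "inv M (x + y) = inv M x + inv M y"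
  by (metis bounded_clinear_op_add[OF bounded] apply_inv inv_apply)

lemma inv_scaleC: "inv M (scaleC c x) = scaleC c (inv M x)"
  by (metis bounded_clinear_op_scaleC[OF bounded] apply_inv inv_apply)

lemma inv_diff: "inv M (x - y) = inv M x - inv M y"
  by (metis bounded_clinear_op_diff[OF bounded] apply_inv inv_apply)

lemma Re_cinner_inv_nonneg: "0 \<le> Re (cinner (inv M q) q)"
  using Re_cinner_nonneg[of "inv M q"] by (simp add: apply_inv Re_cinner_commute)

end

lemma bounded_clinear_op_map_prod:
  assumes M: "bounded_clinear_op M" and N: "bounded_clinear_op N"
  shows "bounded_clinear_op (map_prod M N)"
proof -
  obtain KM KN where K: "KM \<ge> 0" "\<And>x. norm (M x) \<le> KM * norm x" "KN \<ge> 0" "\<And>x. norm (N x) \<le> KN * norm x"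
    using bounded_clinear_op_bound[OF M] bounded_clinear_op_bound[OF N] by metis
  have "norm (map_prod M N (p, r)) \<le> (KM + KN) * norm (p, r)" for p r
  proof -
    have "norm (map_prod M N (p, r)) \<le> norm (M p) + norm (N r)"
      by (simp add: norm_Pair_le)
    also have "\<dots> \<le> KM * norm p + KN * norm r"
      using K by (intro add_mono) auto
    also have "\<dots> \<le> KM * norm (p, r) + KN * norm (p, r)"
      using K norm_fst_le[of p r] norm_snd_le[of r p]
      by (intro add_mono mult_left_mono) auto
    finally show ?thesis by (simp add: algebra_simps)
  qed
  then show ?thesis
    by (intro bounded_clinear_opI[of _ "KM + KN"])
      (auto simp: bounded_clinear_op_add[OF M] bounded_clinear_op_add[OF N]
        bounded_clinear_op_scaleC[OF M] bounded_clinear_op_scaleC[OF N])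
qed

lemma coercive_map_prod:
  assumes "coercive M" and "coercive N"
  shows "coercive (map_prod M N)"
proof -
  obtain \<mu>M \<mu>N where \<mu>: "\<mu>M > 0" "\<And>x. \<mu>M * (norm x)\<^sup>2 \<le> Re (cinner (M x) x)"
      "\<mu>N > 0" "\<And>x. \<mu>N * (norm x)\<^sup>2 \<le> Re (cinner (N x) x)"
    using assms unfolding coercive_def by metis
  have "min \<mu>M \<mu>N * (norm (p, r))\<^sup>2 \<le> Re (cinner (map_prod M N (p, r)) (p, r))" for p r
  proof -
    have "min \<mu>M \<mu>N * (norm (p, r))\<^sup>2 = min \<mu>M \<mu>N * (norm p)\<^sup>2 + min \<mu>M \<mu>N * (norm r)\<^sup>2"
      by (simp add: norm_prod_def distrib_left)
    also have "\<dots> \<le> \<mu>M * (norm p)\<^sup>2 + \<mu>N * (norm r)\<^sup>2"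
      by (intro add_mono mult_right_mono) auto
    also have "\<dots> \<le> Re (cinner (map_prod M N (p, r)) (p, r))"
      using \<mu>(2)[of p] \<mu>(4)[of r] by (simp add: cinner_Pair)
    finally show ?thesis .
  qed
  moreover have "min \<mu>M \<mu>N > 0"
    using \<mu> by simp
  ultimately show ?thesis
    unfolding coercive_def by (metis prod.collapse)
qed

lemma bounded_coercive_map_prod:
  assumes "bounded_coercive M" and "bounded_coercive N"
  shows "bounded_coercive (map_prod M N)"
  using assms bounded_clinear_op_map_prod coercive_map_prod
  unfolding bounded_coercive_def by blast

section \<open>Adjoints of densely defined operators\<close>

context
  fixes Sd :: "'a::complex_inner set" and f :: "'a \<Rightarrow> 'b::complex_inner"
  assumes dense: "closure Sd = UNIV"
begin

lemma adj_unique: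
  assumes "\<forall>x\<in>Sd. cinner (f x) y = cinner x z1" and "\<forall>x\<in>Sd. cinner (f x) y = cinner x z2"
  shows "z1 = z2"
proof -
  have "z1 - z2 = 0"
    by (rule orthogonal_dense_eq_0[OF dense]) (use assms in \<open>simp add: cinner_diff_right\<close>)
  then show ?thesis by simp
qed

lemma adj_domI: "\<forall>x\<in>Sd. cinner (f x) y = cinner x z \<Longrightarrow> y \<in> adj_dom Sd f"
  unfolding adj_dom_def by blast

lemma adj_eqI: "\<forall>x\<in>Sd. cinner (f x) y = cinner x z \<Longrightarrow> adj Sd f y = z"
  unfolding adj_def by (rule the_equality) (use adj_unique in blast)+

lemma cinner_adj:
  assumes "y \<in> adj_dom Sd f" and "x \<in> Sd"
  shows "cinner (f x) y = cinner x (adj Sd f y)"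
proof -
  obtain z where z: "\<forall>x\<in>Sd. cinner (f x) y = cinner x z"
    using assms(1) unfolding adj_dom_def by blast
  then have "adj Sd f y = z" by (rule adj_eqI)
  then show ?thesis using z assms(2) by simp
qed

lemma adj_add:
  assumes "y1 \<in> adj_dom Sd f" "y2 \<in> adj_dom Sd f"
  shows "y1 + y2 \<in> adj_dom Sd f" "adj Sd f (y1 + y2) = adj Sd f y1 + adj Sd f y2"
proof -
  have "\<forall>x\<in>Sd. cinner (f x) (y1 + y2) = cinner x (adj Sd f y1 + adj Sd f y2)"
    using cinner_adj assms by (simp add: cinner_add_right)
  then show "y1 + y2 \<in> adj_dom Sd f" "adj Sd f (y1 + y2) = adj Sd f y1 + adj Sd f y2"
    by (rule adj_domI, rule adj_eqI)
qed

lemma adj_scaleC: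
  assumes "y \<in> adj_dom Sd f"
  shows "scaleC c y \<in> adj_dom Sd f" "adj Sd f (scaleC c y) = scaleC c (adj Sd f y)"
proof -
  have "\<forall>x\<in>Sd. cinner (f x) (scaleC c y) = cinner x (scaleC c (adj Sd f y))"
    using cinner_adj assms by (simp add: cinner_scaleC_right)
  then show "scaleC c y \<in> adj_dom Sd f" "adj Sd f (scaleC c y) = scaleC c (adj Sd f y)"
    by (rule adj_domI, rule adj_eqI)
qed

lemma adj_diff:
  assumes "y1 \<in> adj_dom Sd f" "y2 \<in> adj_dom Sd f"
  shows "adj Sd f (y1 - y2) = adj Sd f y1 - adj Sd f y2"
  using assms cinner_adj by (intro adj_eqI) (simp add: cinner_diff_right)

lemma csubspace_adj_dom: "csubspace (adj_dom Sd f)"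
  unfolding csubspace_def using adj_domI[of 0 0] adj_add adj_scaleC by auto

lemma closed_neg_adj_graph: "closed {(y, - adj Sd f y) | y. y \<in> adj_dom Sd f}"
proof -
  have "{(y, - adj Sd f y) | y. y \<in> adj_dom Sd f}
      = (\<Inter>x\<in>Sd. {p. cinner (f x) (fst p) = - cinner x (snd p)})"
  proof (intro equalityI subsetI)
    fix p
    assume "p \<in> (\<Inter>x\<in>Sd. {p. cinner (f x) (fst p) = - cinner x (snd p)})"
    then have "\<forall>x\<in>Sd. cinner (f x) (fst p) = cinner x (- snd p)"
      by (auto simp: cinner_minus_right)
    then have "fst p \<in> adj_dom Sd f" "adj Sd f (fst p) = - snd p"
      by (rule adj_domI, rule adj_eqI)
    then show "p \<in> {(y, - adj Sd f y) | y. y \<in> adj_dom Sd f}"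
      by (intro CollectI exI[of _ "fst p"]) auto
  qed (auto simp: cinner_adj cinner_minus_right)
  then show ?thesis
    by (simp only:) (intro closed_INT ballI closed_Collect_eq; auto intro!: continuous_intros)
qed

end

text \<open>A closed operator coincides with its double adjoint: this is the projection theorem in the
  product space, applied to the (closed) graph.\<close>

lemma closed_operator_double_adjoint:
  fixes T :: "'a::chilbert_space \<Rightarrow> 'b::chilbert_space"
  assumes T: "densely_defined_closed Sd T"
    and adj_adj: "\<forall>y\<in>adj_dom Sd T. cinner (adj Sd T y) x = cinner y w"
  shows "x \<in> Sd" "T x = w"
proof -
  have lin: "clinear_on Sd T" and dense: "closure Sd = UNIV"
    and cl: "closed {(x, T x) | x. x \<in> Sd}"
    using T unfolding densely_defined_closed_def by auto
  obtain x' where x': "x' \<in> Sd"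
    and orth: "\<forall>z\<in>{(x, T x) | x. x \<in> Sd}. cinner ((x, w) - (x', T x')) z = 0"
    using orthogonal_projection_exists[OF csubspace_graph[OF lin] cl] by blast
  define p where "p = x - x'"
  define r where "r = w - T x'"
  have orth': "cinner p u + cinner r (T u) = 0" if "u \<in> Sd" for u
    using orth that unfolding p_def r_def by (auto simp: cinner_Pair)
  have "\<forall>u\<in>Sd. cinner (T u) r = cinner u (- p)"
  proof
    fix u assume u: "u \<in> Sd"
    have "cinner r (T u) = - cinner p u"
      using orth'[OF u] by (simp add: eq_neg_iff_add_eq_0 add.commute)
    then show "cinner (T u) r = cinner u (- p)"
      by (metis cinner_commute cinner_minus_right complex_cnj_minus)
  qed
  then have r: "r \<in> adj_dom Sd T" "adj Sd T r = - p"
    using adj_domI[OF dense] adj_eqI[OF dense] by blast+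
  \<comment> \<open>\<open>(p, r)\<close> is orthogonal both to \<open>(x, w)\<close> (by the hypothesis) and to \<open>(x', T x')\<close>\<close>
  have "cinner p x + cinner r w = 0"
    using adj_adj r by (metis cinner_minus_left neg_eq_iff_add_eq_0)
  moreover have "cinner p x' + cinner r (T x') = 0"
    using orth'[OF x'] .
  moreover have "cinner (p, r) (p, r) = (cinner p x + cinner r w) - (cinner p x' + cinner r (T x'))"
    unfolding cinner_Pair unfolding p_def r_def by (simp add: cinner_diff_right)
  ultimately have "cinner (p, r) (p, r) = 0"
    by simp
  then show "x \<in> Sd" "T x = w"
    using x' unfolding p_def r_def by (auto simp: zero_prod_def)
qed

lemma ginner_Pair: "ginner f x y = cinner (x, f x) (y, f y)"
  by (simp add: ginner_def cinner_Pair)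

lemma gnorm_Pair: "gnorm f x = norm (x, f x)"
  by (simp add: gnorm_def norm_prod_def)

lemma ginner_commute: "ginner f x y = cnj (ginner f y x)"
  unfolding ginner_Pair by (rule cinner_commute)

lemma ginner_self_eq_0D: "ginner f x x = 0 \<Longrightarrow> x = 0"
  by (simp add: ginner_Pair zero_prod_def)

lemma gnorm_nonneg: "0 \<le> gnorm f x"
  by (simp add: gnorm_def)

lemma graph_orthogonal_decomposition:
  fixes T :: "'a::chilbert_space \<Rightarrow> 'b::chilbert_space"
  assumes lin: "clinear_on Sd T" and sub: "S \<subseteq> Sd" "csubspace S"
    and cl: "closed {(v, T v) | v. v \<in> S}" and u: "u \<in> Sd"
  shows "\<exists>w\<in>S. \<forall>v\<in>S. ginner T (u - w) v = 0"
proof -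
  have "csubspace {(v, T v) | v. v \<in> S}"
    by (rule csubspace_graph[OF clinear_on_subset[OF lin sub]])
  then obtain w where w: "w \<in> S" and orth: "\<forall>v\<in>S. cinner ((u, T u) - (w, T w)) (v, T v) = 0"
    using orthogonal_projection_exists[OF _ cl] by blast
  have "T (u - w) = T u - T w"
    using clinear_on_diff[OF lin u] w sub by blast
  then show ?thesis
    using w orth unfolding ginner_Pair by (intro bexI[of _ w]) simp_all
qed

lemma gproj_eqI:
  assumes lin: "clinear_on Sd f" and sub: "S \<subseteq> Sd" "csubspace S" and v: "v \<in> Sd"
    and w0: "w0 \<in> S" and orth: "\<forall>z\<in>S. ginner f (v - w0) z = 0"
  shows "gproj S f v = w0"
  unfolding gproj_def
proof (rule the_equality)
  show "w0 \<in> S \<and> (\<forall>z\<in>S. ginner f (v - w0) z = 0)"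
    using w0 orth by blast
next
  fix w
  assume w: "w \<in> S \<and> (\<forall>z\<in>S. ginner f (v - w) z = 0)"
  define d where "d = w - w0"
  have d: "d \<in> S" "d = (v - w0) - (v - w)"
    unfolding d_def using csubspace_diff[OF sub(2)] w w0 by auto
  have "v - w \<in> Sd" "v - w0 \<in> Sd"
    using csubspace_diff[OF clinear_on_csubspace[OF lin]] v w w0 sub by blast+
  then have "f d = f (v - w0) - f (v - w)"
    using clinear_on_diff[OF lin \<open>v - w0 \<in> Sd\<close> \<open>v - w \<in> Sd\<close>] by (simp only: d(2))
  moreover have "cinner d d = cinner (v - w0) d - cinner (v - w) d"
    by (metis d(2) cinner_diff_left)
  ultimately have "ginner f d d = ginner f (v - w0) d - ginner f (v - w) d"
    unfolding ginner_def by (simp add: cinner_diff_left)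
  also have "\<dots> = 0"
    using orth w d by simp
  finally have "d = 0"
    by (rule ginner_self_eq_0D)
  then show "w = w0"
    unfolding d_def by simp
qed

section \<open>Boundary data spaces\<close>

locale dtn_setting =
  fixes domG :: "'h0::chilbert_space set" and G :: "'h0 \<Rightarrow> 'h1::chilbert_space"
    and domD :: "'h1 set" and D :: "'h1 \<Rightarrow> 'h0"
    and a :: "'h1 \<Rightarrow> 'h1" and m :: "'h0 \<Rightarrow> 'h0"
  assumes G: "densely_defined_closed domG G"
    and D: "densely_defined_closed domD D"
    and GD: "op_subset (adj_dom domG G) (\<lambda>y. - adj domG G y) domD D"
    and a: "bounded_clinear_op a" "coercive a"
    and m: "bounded_clinear_op m" "coercive m"
begin

sublocale a: bounded_coercive a
  using a by unfold_locales

sublocale m: bounded_coercive m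
  using m by unfold_locales

sublocale ma: bounded_coercive "map_prod m a"
  by (rule bounded_coercive_map_prod) unfold_locales

text \<open>\<open>Gs\<close> and \<open>Ds\<close> are the adjoints \<open>G\<^sup>*\<close> and \<open>D\<^sup>*\<close>, so that \<open>\<mathring>D = -Gs\<close> and \<open>\<mathring>G = -Ds\<close>.\<close>

abbreviation "domGs \<equiv> adj_dom domG G"
abbreviation "Gs \<equiv> adj domG G"
abbreviation "domDs \<equiv> adj_dom domD D"
abbreviation "Ds \<equiv> adj domD D"
abbreviation "BDG \<equiv> BD_G domG G domD D"
abbreviation "BDD \<equiv> BD_D domG G domD D"

lemma dense_domG: "closure domG = UNIV" and clinear_G: "clinear_on domG G"
  and closed_graph_G: "closed {(x, G x) | x. x \<in> domG}"
  using G unfolding densely_defined_closed_def by auto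

lemma dense_domD: "closure domD = UNIV" and clinear_D: "clinear_on domD D"
  using D unfolding densely_defined_closed_def by auto

lemma csubspace_domG: "csubspace domG"
  using clinear_on_csubspace[OF clinear_G] .

lemma csubspace_domD: "csubspace domD"
  using clinear_on_csubspace[OF clinear_D] .

lemma csubspace_domGs: "csubspace domGs"
  by (rule csubspace_adj_dom[OF dense_domG])

lemma csubspace_domDs: "csubspace domDs"
  by (rule csubspace_adj_dom[OF dense_domD])

lemma G_add: "x \<in> domG \<Longrightarrow> y \<in> domG \<Longrightarrow> G (x + y) = G x + G y"
  by (rule clinear_on_add[OF clinear_G])

lemma G_diff: "x \<in> domG \<Longrightarrow> y \<in> domG \<Longrightarrow> G (x - y) = G x - G y"
  by (rule clinear_on_diff[OF clinear_G])

lemma G_scaleC: "x \<in> domG \<Longrightarrow> G (scaleC c x) = scaleC c (G x)"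
  by (rule clinear_on_scaleC[OF clinear_G])

lemma G_0: "G 0 = 0"
  by (rule clinear_on_0[OF clinear_G])

lemma D_add: "x \<in> domD \<Longrightarrow> y \<in> domD \<Longrightarrow> D (x + y) = D x + D y"
  by (rule clinear_on_add[OF clinear_D])

lemma D_diff: "x \<in> domD \<Longrightarrow> y \<in> domD \<Longrightarrow> D (x - y) = D x - D y"
  by (rule clinear_on_diff[OF clinear_D])

lemma cinner_G_Gs: "y \<in> domGs \<Longrightarrow> x \<in> domG \<Longrightarrow> cinner (G x) y = cinner x (Gs y)"
  by (rule cinner_adj[OF dense_domG])

lemma cinner_D_Ds: "v \<in> domDs \<Longrightarrow> x \<in> domD \<Longrightarrow> cinner (D x) v = cinner x (Ds v)"
  by (rule cinner_adj[OF dense_domD])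

lemma domGs_subset_domD: "y \<in> domGs \<Longrightarrow> y \<in> domD"
  and D_domGs: "y \<in> domGs \<Longrightarrow> D y = - Gs y"
  using GD unfolding op_subset_def by auto

text \<open>The dual inclusion \<open>-D\<^sup>* \<subseteq> G\<close>, from \<open>-G\<^sup>* \<subseteq> D\<close> and \<open>G = G\<^sup>*\<^sup>*\<close>.\<close>

lemma domDs_subset_domG: "v \<in> domDs \<Longrightarrow> v \<in> domG"
  and G_domDs: "v \<in> domDs \<Longrightarrow> G v = - Ds v"
proof -
  assume v: "v \<in> domDs"
  have "\<forall>y\<in>domGs. cinner (Gs y) v = cinner y (- Ds v)"
  proof
    fix y assume y: "y \<in> domGs"
    have "cinner (Gs y) v = - cinner (D y) v"
      using D_domGs[OF y] by (simp add: cinner_minus_left)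
    also have "\<dots> = cinner y (- Ds v)"
      using cinner_D_Ds[OF v domGs_subset_domD[OF y]] by (simp add: cinner_minus_right)
    finally show "cinner (Gs y) v = cinner y (- Ds v)" .
  qed
  from closed_operator_double_adjoint[OF G this]
  show "v \<in> domG" "G v = - Ds v" by auto
qed

lemma BDG_iff: "x \<in> BDG \<longleftrightarrow> x \<in> domG \<and> (\<forall>y\<in>domDs. ginner G x y = 0)"
  by (simp add: BD_G_def Gc_dom_def)

lemma BDD_iff: "y \<in> BDD \<longleftrightarrow> y \<in> domD \<and> (\<forall>z\<in>domGs. ginner D y z = 0)"
  by (simp add: BD_D_def Dc_dom_def)

lemma BDG_subset_domG: "x \<in> BDG \<Longrightarrow> x \<in> domG"
  by (simp add: BDG_iff)

lemma csubspace_orthogonal_graph: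
  assumes lin: "clinear_on S f" and T: "T \<subseteq> S"
  shows "csubspace {x \<in> S. \<forall>y\<in>T. ginner f x y = 0}"
proof -
  have "ginner f (x + y) z = ginner f x z + ginner f y z" if "x \<in> S" "y \<in> S" for x y z
    using that by (simp add: ginner_def clinear_on_add[OF lin] cinner_add_left)
  moreover have "ginner f (scaleC c x) z = cnj c * ginner f x z" if "x \<in> S" for c x z
    using that by (simp add: ginner_def clinear_on_scaleC[OF lin] cinner_scaleC_left distrib_left)
  moreover have "ginner f 0 z = 0" for z
    by (simp add: ginner_def clinear_on_0[OF lin])
  ultimately show ?thesis
    using clinear_on_csubspace[OF lin] by (auto simp: csubspace_def)
qed

lemma csubspace_BDG: "csubspace BDG"
  using csubspace_orthogonal_graph[OF clinear_G, of domDs] domDs_subset_domG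
  by (simp add: BD_G_def Gc_dom_def subset_iff)

lemma csubspace_BDD: "csubspace BDD"
  using csubspace_orthogonal_graph[OF clinear_D, of domGs] domGs_subset_domD
  by (simp add: BD_D_def Dc_dom_def subset_iff)

lemma G_BDG_in_domD: "f \<in> BDG \<Longrightarrow> G f \<in> domD"
  and D_G_BDG: "f \<in> BDG \<Longrightarrow> D (G f) = f"
proof -
  assume f: "f \<in> BDG"
  have "\<forall>y\<in>domDs. cinner (Ds y) (G f) = cinner y f"
  proof
    fix y assume y: "y \<in> domDs"
    have "cinner f y + cinner (G f) (G y) = 0"
      using f y by (simp add: BDG_iff ginner_def)
    then have "cinner f y = cinner (G f) (Ds y)"
      using G_domDs[OF y] by (simp add: cinner_minus_right eq_neg_iff_add_eq_0)
    then show "cinner (Ds y) (G f) = cinner y f"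
      by (metis cinner_commute)
  qed
  from closed_operator_double_adjoint[OF D this]
  show "G f \<in> domD" "D (G f) = f" by auto
qed

lemma G_BDG_in_BDD:
  assumes f: "f \<in> BDG"
  shows "G f \<in> BDD"
  unfolding BDD_iff
proof (intro conjI ballI)
  show "G f \<in> domD" using G_BDG_in_domD[OF f] .
  fix z assume z: "z \<in> domGs"
  have "ginner D (G f) z = cinner (G f) z + cinner f (D z)"
    unfolding ginner_def D_G_BDG[OF f] ..
  also have "\<dots> = 0"
    using cinner_G_Gs[OF z BDG_subset_domG[OF f]] D_domGs[OF z] by (simp add: cinner_minus_right)
  finally show "ginner D (G f) z = 0" .
qed

lemma closed_graph_domDs: "closed {(v, G v) | v. v \<in> domDs}"
proof -
  have "{(v, G v) | v. v \<in> domDs} = {(v, - Ds v) | v. v \<in> domDs}"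
    using G_domDs by auto
  then show ?thesis
    using closed_neg_adj_graph[OF dense_domD] by simp
qed

lemma closed_graph_domGs: "closed {(y, D y) | y. y \<in> domGs}"
proof -
  have "{(y, D y) | y. y \<in> domGs} = {(y, - Gs y) | y. y \<in> domGs}"
    using D_domGs by auto
  then show ?thesis
    using closed_neg_adj_graph[OF dense_domG] by simp
qed

lemma BDG_decomposition:
  assumes u: "u \<in> domG"
  shows "\<exists>w\<in>domDs. u - w \<in> BDG"
proof -
  obtain w where w: "w \<in> domDs" "\<forall>v\<in>domDs. ginner G (u - w) v = 0"
    using graph_orthogonal_decomposition[OF clinear_G _ csubspace_domDs closed_graph_domDs u]
      domDs_subset_domG by blast
  moreover have "u - w \<in> domG"
    using csubspace_diff[OF csubspace_domG u domDs_subset_domG[OF w(1)]] .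
  ultimately show ?thesis using BDG_iff by blast
qed

lemma BDD_decomposition:
  assumes z: "z \<in> domD"
  shows "\<exists>y\<in>domGs. z - y \<in> BDD"
proof -
  obtain y where y: "y \<in> domGs" "\<forall>v\<in>domGs. ginner D (z - y) v = 0"
    using graph_orthogonal_decomposition[OF clinear_D _ csubspace_domGs closed_graph_domGs z]
      domGs_subset_domD by blast
  moreover have "z - y \<in> domD"
    using csubspace_diff[OF csubspace_domD z domGs_subset_domD[OF y(1)]] .
  ultimately show ?thesis using BDD_iff by blast
qed

lemma gproj_BDG_eqI:
  assumes v: "v \<in> domG" and u0: "u0 \<in> BDG" and v_u0: "v - u0 \<in> domDs"
  shows "gproj BDG G v = u0"
proof (rule gproj_eqI[OF clinear_G _ csubspace_BDG v u0])
  show "BDG \<subseteq> domG" using BDG_subset_domG by auto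
  show "\<forall>z\<in>BDG. ginner G (v - u0) z = 0"
    using v_u0 BDG_iff ginner_commute[of G "v - u0"] by fastforce
qed

lemma gproj_BDD_eqI:
  assumes z: "z \<in> domD" and w0: "w0 \<in> BDD" and z_w0: "z - w0 \<in> domGs"
  shows "gproj BDD D z = w0"
proof (rule gproj_eqI[OF clinear_D _ csubspace_BDD z w0])
  show "BDD \<subseteq> domD" using BDD_iff by auto
  show "\<forall>y\<in>BDD. ginner D (z - w0) y = 0"
    using z_w0 BDD_iff ginner_commute[of D "z - w0"] by fastforce
qed

lemma gproj_BDG:
  assumes v: "v \<in> domG"
  shows "gproj BDG G v \<in> BDG" "v - gproj BDG G v \<in> domDs"
proof -
  obtain w where w: "w \<in> domDs" "v - w \<in> BDG"
    using BDG_decomposition[OF v] by blast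
  then have "gproj BDG G v = v - w"
    by (intro gproj_BDG_eqI[OF v]) simp_all
  then show "gproj BDG G v \<in> BDG" "v - gproj BDG G v \<in> domDs"
    using w by auto
qed

lemma diff_gproj_BDD:
  assumes z: "z \<in> domD"
  shows "z - gproj BDD D z \<in> domGs"
proof -
  obtain y where y: "y \<in> domGs" "z - y \<in> BDD"
    using BDD_decomposition[OF z] by blast
  then have "gproj BDD D z = z - y"
    by (intro gproj_BDD_eqI[OF z]) simp_all
  then show ?thesis
    using y by auto
qed

lemma gproj_BDG_add:
  assumes v: "v1 \<in> domG" "v2 \<in> domG"
  shows "gproj BDG G (v1 + v2) = gproj BDG G v1 + gproj BDG G v2"
proof (rule gproj_BDG_eqI)
  show "v1 + v2 \<in> domG"
    using csubspace_add[OF csubspace_domG v] .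
  show "gproj BDG G v1 + gproj BDG G v2 \<in> BDG"
    using csubspace_add[OF csubspace_BDG gproj_BDG(1)[OF v(1)] gproj_BDG(1)[OF v(2)]] .
  have eq: "v1 + v2 - (gproj BDG G v1 + gproj BDG G v2) = (v1 - gproj BDG G v1) + (v2 - gproj BDG G v2)"
    by simp
  show "v1 + v2 - (gproj BDG G v1 + gproj BDG G v2) \<in> domDs"
    unfolding eq using csubspace_add[OF csubspace_domDs gproj_BDG(2)[OF v(1)] gproj_BDG(2)[OF v(2)]] .
qed

lemma gproj_BDG_scaleC:
  assumes v: "v \<in> domG"
  shows "gproj BDG G (scaleC c v) = scaleC c (gproj BDG G v)"
proof (rule gproj_BDG_eqI)
  show "scaleC c v \<in> domG"
    using csubspace_scaleC[OF csubspace_domG v] .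
  show "scaleC c (gproj BDG G v) \<in> BDG"
    using csubspace_scaleC[OF csubspace_BDG gproj_BDG(1)[OF v]] .
  show "scaleC c v - scaleC c (gproj BDG G v) \<in> domDs"
    using csubspace_scaleC[OF csubspace_domDs gproj_BDG(2)[OF v]] by (simp add: scaleC_diff_right)
qed

lemma gnorm_gproj_BDG_le:
  assumes u: "u \<in> domG"
  shows "gnorm G (gproj BDG G u) \<le> gnorm G u"
proof -
  define u0 where "u0 = gproj BDG G u"
  define w where "w = u - u0"
  have u0: "u0 \<in> BDG" and w: "w \<in> domDs"
    using gproj_BDG[OF u] unfolding u0_def w_def by auto
  have sum: "(u, G u) = (u0, G u0) + (w, G w)"
    using G_add[OF BDG_subset_domG[OF u0] domDs_subset_domG[OF w]] unfolding w_def by simp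
  have orth: "cinner (u0, G u0) (w, G w) = 0"
    using u0 w BDG_iff ginner_Pair by metis
  have "(norm (u, G u))\<^sup>2 = (norm (u0, G u0))\<^sup>2 + (norm (w, G w))\<^sup>2"
    unfolding sum norm_add_sq orth by simp
  then have "(norm (u0, G u0))\<^sup>2 \<le> (norm (u, G u))\<^sup>2"
    by simp
  then show ?thesis
    unfolding gnorm_Pair u0_def by (simp add: power2_le_iff_abs_le)
qed

end

section \<open>The Dirichlet problem and the block operator\<close>

context dtn_setting
begin

lemma csubspace_graph_domDs: "csubspace {(v, G v) | v. v \<in> domDs}"
  using clinear_on_subset[OF clinear_G _ csubspace_domDs] domDs_subset_domG
  by (intro csubspace_graph) blast

lemma csubspace_graph_G: "csubspace {(x, G x) | x. x \<in> domG}"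
  by (rule csubspace_graph[OF clinear_G])

definition dirichlet_solution :: "'h0 \<Rightarrow> 'h0 \<Rightarrow> bool" where
  "dirichlet_solution u u0 \<longleftrightarrow>
     u \<in> domG \<and> a (G u) \<in> domD \<and> m u - D (a (G u)) = 0 \<and> u - u0 \<in> domDs"

text \<open>Testing only against \<open>dom(\<mathring>G)\<close> already forces \<open>aGu \<in> dom(D)\<close>, since \<open>\<mathring>G = -D\<^sup>*\<close>.\<close>

lemma aG_in_domD_if_weak_solution:
  assumes weak: "\<And>v. v \<in> domDs \<Longrightarrow> cinner (m u) v + cinner (a (G u)) (G v) = 0"
  shows "a (G u) \<in> domD" "D (a (G u)) = m u"
proof -
  have "\<forall>v\<in>domDs. cinner (Ds v) (a (G u)) = cinner v (m u)"
  proof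
    fix v assume v: "v \<in> domDs"
    have "cinner (a (G u)) (Ds v) = cinner (m u) v"
      using weak[OF v] G_domDs[OF v] by (simp add: cinner_minus_right eq_neg_iff_add_eq_0)
    then show "cinner (Ds v) (a (G u)) = cinner v (m u)"
      by (metis cinner_commute)
  qed
  from closed_operator_double_adjoint[OF D this]
  show "a (G u) \<in> domD" "D (a (G u)) = m u" by auto
qed

lemma dirichlet_solution_exists:
  assumes u0: "u0 \<in> domG"
  shows "\<exists>u. dirichlet_solution u u0"
proof -
  obtain w where w: "w \<in> domDs"
    and orth: "\<forall>V\<in>{(v, G v) | v. v \<in> domDs}.
      cinner (map_prod m a (w, G w) - - map_prod m a (u0, G u0)) V = 0"
    using ma.weak_solution_exists[OF csubspace_graph_domDs closed_graph_domDs] by blast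
  define u where "u = u0 + w"
  have u: "u \<in> domG" "G u = G u0 + G w"
    unfolding u_def using csubspace_add[OF csubspace_domG u0] G_add[OF u0] domDs_subset_domG[OF w]
    by auto
  have "map_prod m a (w, G w) - - map_prod m a (u0, G u0) = (m u, a (G u))"
    unfolding u(2) by (simp add: u_def bounded_clinear_op_add[OF m(1)] bounded_clinear_op_add[OF a(1)])
  then have "cinner (m u) v + cinner (a (G u)) (G v) = 0" if "v \<in> domDs" for v
    using orth that by (auto simp: cinner_Pair)
  note aGu = aG_in_domD_if_weak_solution[OF this]
  then show ?thesis
    using u w aGu unfolding dirichlet_solution_def u_def by auto
qed

lemma dirichlet_solution_unique:
  assumes u1: "dirichlet_solution u1 u0" and u2: "dirichlet_solution u2 u0"
  shows "u1 = u2"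
proof -
  note u1 = u1[unfolded dirichlet_solution_def] and u2 = u2[unfolded dirichlet_solution_def]
  define w where "w = u1 - u2"
  have w: "w \<in> domDs" "w \<in> domG"
    unfolding w_def using csubspace_diff[OF csubspace_domDs, of "u1 - u0" "u2 - u0"]
      csubspace_diff[OF csubspace_domG, of u1 u2] u1 u2 by simp_all
  have aGw: "a (G w) = a (G u1) - a (G u2)"
    unfolding w_def G_diff[OF u1[THEN conjunct1] u2[THEN conjunct1]] bounded_clinear_op_diff[OF a(1)] ..
  then have aGw_domD: "a (G w) \<in> domD"
    using csubspace_diff[OF csubspace_domD] u1 u2 by simp
  have "m w = D (a (G u1)) - D (a (G u2))"
    unfolding w_def bounded_clinear_op_diff[OF m(1)] using u1 u2 by simp
  also have "\<dots> = D (a (G w))"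
    unfolding aGw using D_diff u1 u2 by simp
  finally have "m w = D (a (G w))" .
  \<comment> \<open>\<open>\<langle>mw, w\<rangle> = \<langle>DaGw, w\<rangle> = -\<langle>aGw, Gw\<rangle>\<close> since \<open>w \<in> dom(\<mathring>G)\<close>\<close>
  then have "cinner (m w) w = - cinner (a (G w)) (G w)"
    using cinner_D_Ds[OF w(1) aGw_domD] G_domDs[OF w(1)] by (simp add: cinner_minus_right)
  then have "Re (cinner (m w) w) \<le> 0"
    using a.Re_cinner_nonneg[of "G w"] by simp
  then have "w = 0" by (rule m.eq_0_if_Re_cinner_nonpos)
  then show ?thesis unfolding w_def by simp
qed

lemma dir_sol_eqI:
  assumes "dirichlet_solution u u0"
  shows "dir_sol domG G domD D a m u0 = u"
  unfolding dir_sol_def Gc_dom_def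
proof (rule the_equality)
  show "u \<in> domG \<and> a (G u) \<in> domD \<and> m u - D (a (G u)) = 0 \<and> u - u0 \<in> domDs"
    using assms unfolding dirichlet_solution_def .
  fix u'
  assume "u' \<in> domG \<and> a (G u') \<in> domD \<and> m u' - D (a (G u')) = 0 \<and> u' - u0 \<in> domDs"
  then have "dirichlet_solution u' u0"
    unfolding dirichlet_solution_def .
  then show "u' = u"
    using dirichlet_solution_unique assms by blast
qed

lemma dirichlet_solution_dir_sol:
  assumes "u0 \<in> domG"
  shows "dirichlet_solution (dir_sol domG G domD D a m u0) u0"
proof -
  obtain u where "dirichlet_solution u u0"
    using dirichlet_solution_exists[OF assms] ..
  then show ?thesis using dir_sol_eqI by simp
qed

lemma block_dom_iff: "(u, q) \<in> block_dom domG G \<longleftrightarrow> u \<in> domG \<and> q \<in> domGs"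
  by (simp add: block_dom_def Dc_dom_def)

lemma block_op_Pair: "block_op domG G a m (u, q) = (m u + Gs q, - G u + inv a q)"
  by (simp add: block_op_def Dc_def)

lemma block_op_surj: "\<exists>x\<in>block_dom domG G. block_op domG G a m x = y"
proof -
  obtain y1 y2 where y: "y = (y1, y2)" by fastforce
  obtain u where u: "u \<in> domG"
    and orth: "\<forall>V\<in>{(x, G x) | x. x \<in> domG}. cinner (map_prod m a (u, G u) - (y1, - a y2)) V = 0"
    using ma.weak_solution_exists[OF csubspace_graph_G closed_graph_G] by blast
  define q where "q = a (G u + y2)"
  have "map_prod m a (u, G u) - (y1, - a y2) = (m u - y1, q)"
    unfolding q_def by (simp add: bounded_clinear_op_add[OF a(1)])
  then have orth': "cinner (m u - y1) v + cinner q (G v) = 0" if "v \<in> domG" for v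
    using orth that by (auto simp: cinner_Pair)
  have "\<forall>v\<in>domG. cinner (G v) q = cinner v (y1 - m u)"
  proof
    fix v assume v: "v \<in> domG"
    have "cinner q (G v) = cinner (y1 - m u) v"
      using orth'[OF v] by (simp add: cinner_diff_left eq_neg_iff_add_eq_0 algebra_simps)
    then show "cinner (G v) q = cinner v (y1 - m u)"
      by (metis cinner_commute)
  qed
  then have q: "q \<in> domGs" "Gs q = y1 - m u"
    by (rule adj_domI[OF dense_domG], rule adj_eqI[OF dense_domG])
  have "block_op domG G a m (u, q) = y"
    unfolding block_op_Pair q(2) by (simp add: q_def a.inv_apply y)
  moreover have "(u, q) \<in> block_dom domG G"
    using u q block_dom_iff by simp
  ultimately show ?thesis by blast
qed

lemma block_op_inj:
  assumes x1: "x1 \<in> block_dom domG G" and x2: "x2 \<in> block_dom domG G"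
    and eq: "block_op domG G a m x1 = block_op domG G a m x2"
  shows "x1 = x2"
proof -
  obtain u1 q1 u2 q2 where p: "x1 = (u1, q1)" "x2 = (u2, q2)" by fastforce
  have d: "u1 \<in> domG" "q1 \<in> domGs" "u2 \<in> domG" "q2 \<in> domGs"
    using x1 x2 p block_dom_iff by auto
  define u where "u = u1 - u2"
  define q where "q = q1 - q2"
  have u: "u \<in> domG" and q: "q \<in> domGs"
    unfolding u_def q_def using csubspace_diff csubspace_domG csubspace_domGs d by blast+
  have "m u1 + Gs q1 = m u2 + Gs q2" and "- G u1 + inv a q1 = - G u2 + inv a q2"
    using eq unfolding p block_op_Pair by auto
  then have mu: "m u = - Gs q" and Gu: "G u = inv a q"
    unfolding u_def q_def bounded_clinear_op_diff[OF m(1)] adj_diff[OF dense_domG d(2) d(4)]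
      a.inv_diff G_diff[OF d(1) d(3)] by (simp_all add: algebra_simps)
  \<comment> \<open>\<open>\<langle>mu, u\<rangle> = -\<langle>Gu, q\<rangle>\<^sup>* = -\<langle>a\<^sup>-\<^sup>1q, q\<rangle>\<^sup>*\<close>, whose real part is \<open>\<le> 0\<close>\<close>
  have "cinner (m u) u = - cinner (Gs q) u"
    unfolding mu by (rule cinner_minus_left)
  also have "cinner (Gs q) u = cnj (cinner (inv a q) q)"
    unfolding Gu[symmetric] cinner_G_Gs[OF q u] by (rule cinner_commute)
  finally have "cinner (m u) u = - cnj (cinner (inv a q) q)" .
  then have "Re (cinner (m u) u) \<le> 0"
    using a.Re_cinner_inv_nonneg[of q] by simp
  then have "u = 0" by (rule m.eq_0_if_Re_cinner_nonpos)
  moreover have "q = 0"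
  proof -
    have "inv a q = 0"
      using Gu \<open>u = 0\<close> G_0 by simp
    then show ?thesis
      using a.apply_inv[of q] bounded_clinear_op_0[OF a(1)] by simp
  qed
  ultimately show ?thesis
    unfolding p u_def q_def by simp
qed

lemma block_inv_eqI:
  assumes "x \<in> block_dom domG G" "block_op domG G a m x = y"
  shows "block_inv domG G a m y = x"
  unfolding block_inv_def by (rule the_equality) (use assms block_op_inj in blast)+

lemma block_inv_in_block_dom: "block_inv domG G a m y \<in> block_dom domG G"
  and block_op_block_inv: "block_op domG G a m (block_inv domG G a m y) = y"
proof -
  obtain x where x: "x \<in> block_dom domG G" "block_op domG G a m x = y"
    using block_op_surj by blast
  then have "block_inv domG G a m y = x"
    by (rule block_inv_eqI)
  with x show "block_inv domG G a m y \<in> block_dom domG G"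
    "block_op domG G a m (block_inv domG G a m y) = y" by simp_all
qed

lemma block_op_bij: "\<forall>y. \<exists>!x. x \<in> block_dom domG G \<and> block_op domG G a m x = y"
  using block_op_surj block_op_inj by blast

lemma csubspace_block_dom: "csubspace (block_dom domG G)"
  unfolding block_dom_def Dc_dom_def csubspace_def
  using csubspace_domG csubspace_domGs by (auto simp: zero_prod_def csubspace_def)

lemma block_op_add:
  "x1 \<in> block_dom domG G \<Longrightarrow> x2 \<in> block_dom domG G \<Longrightarrow>
    block_op domG G a m (x1 + x2) = block_op domG G a m x1 + block_op domG G a m x2"
  unfolding block_dom_def Dc_dom_def
  by (auto simp: block_op_def Dc_def bounded_clinear_op_add[OF m(1)] G_add a.inv_add
      adj_add[OF dense_domG])

lemma block_op_scaleC:
  "x \<in> block_dom domG G \<Longrightarrow> block_op domG G a m (scaleC c x) = scaleC c (block_op domG G a m x)"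
  unfolding block_dom_def Dc_dom_def
  by (auto simp: block_op_def Dc_def bounded_clinear_op_scaleC[OF m(1)] G_scaleC a.inv_scaleC
      adj_scaleC[OF dense_domG] scaleC_diff_right scaleC_add_right scaleC_minus_right)

lemma block_inv_add:
  "block_inv domG G a m (y1 + y2) = block_inv domG G a m y1 + block_inv domG G a m y2"
  by (rule block_inv_eqI)
    (simp_all add: block_op_add block_inv_in_block_dom block_op_block_inv
      csubspace_add[OF csubspace_block_dom])

lemma block_inv_scaleC:
  "block_inv domG G a m (scaleC c y) = scaleC c (block_inv domG G a m y)"
  by (rule block_inv_eqI)
    (simp_all add: block_op_scaleC block_inv_in_block_dom block_op_block_inv
      csubspace_scaleC[OF csubspace_block_dom])

end

context dtn_setting
begin

text \<open>The second row of the block system with right-hand side \<open>(f, -a\<^sup>-\<^sup>1Gf)\<close> says \<open>aGu = q + Gf\<close>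
  with \<open>q \<in> dom(\<mathring>D)\<close>; so for \<open>f \<in> BD(G)\<close>, \<open>u\<close> solves the Dirichlet problem with Neumann datum \<open>Gf\<close>.\<close>

definition neumann_solution :: "'h0 \<Rightarrow> 'h0" where
  "neumann_solution f = fst (block_inv domG G a m (f, - inv a (G f)))"

lemma neumann_solution_eqs:
  obtains q where "neumann_solution f \<in> domG" "q \<in> domGs"
    "a (G (neumann_solution f)) = q + G f" "m (neumann_solution f) + Gs q = f"
proof -
  obtain u q where uq: "block_inv domG G a m (f, - inv a (G f)) = (u, q)"
    by fastforce
  then have u: "neumann_solution f = u"
    unfolding neumann_solution_def by simp
  have "(u, q) \<in> block_dom domG G" "block_op domG G a m (u, q) = (f, - inv a (G f))"
    using block_inv_in_block_dom block_op_block_inv uq by metis+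
  then have dom: "u \<in> domG" "q \<in> domGs" and eq1: "m u + Gs q = f"
    and eq2: "- G u + inv a q = - inv a (G f)"
    unfolding block_op_Pair block_dom_iff by auto
  have "inv a q = G u - inv a (G f)"
    using eq2 by (simp add: algebra_simps)
  then have "a (inv a q) = a (G u) - G f"
    by (simp add: bounded_clinear_op_diff[OF a(1)] a.apply_inv)
  then have "a (G u) = q + G f"
    by (simp add: a.apply_inv)
  then show thesis
    using that dom eq1 unfolding u by simp
qed

lemma neumann_solution_dirichlet:
  assumes f: "f \<in> BDG"
  shows "dirichlet_solution (neumann_solution f) (gproj BDG G (neumann_solution f))"
    and "DtN domG G domD D a m (gproj BDG G (neumann_solution f)) = G f"
proof -
  define u where "u = neumann_solution f"
  obtain q where u: "u \<in> domG" and q: "q \<in> domGs"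
    and aGu: "a (G u) = q + G f" and mu: "m u + Gs q = f"
    using neumann_solution_eqs unfolding u_def by blast
  have aGu_domD: "a (G u) \<in> domD"
    unfolding aGu using csubspace_add[OF csubspace_domD domGs_subset_domD[OF q] G_BDG_in_domD[OF f]] .
  have "D (a (G u)) = D q + D (G f)"
    unfolding aGu using D_add[OF domGs_subset_domD[OF q] G_BDG_in_domD[OF f]] .
  also have "\<dots> = m u"
    using D_domGs[OF q] D_G_BDG[OF f] mu by (simp add: algebra_simps)
  finally have "dirichlet_solution u (gproj BDG G u)"
    unfolding dirichlet_solution_def using u aGu_domD gproj_BDG(2)[OF u] by simp
  then show "dirichlet_solution (neumann_solution f) (gproj BDG G (neumann_solution f))"
    unfolding u_def .
  then have "DtN domG G domD D a m (gproj BDG G u) = gproj BDD D (a (G u))"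
    unfolding DtN_def u_def by (simp add: dir_sol_eqI)
  also have "\<dots> = G f"
    by (rule gproj_BDD_eqI[OF aGu_domD G_BDG_in_BDD[OF f]]) (use aGu q in simp)
  finally show "DtN domG G domD D a m (gproj BDG G (neumann_solution f)) = G f"
    unfolding u_def .
qed

lemma gnorm_neumann_solution_le:
  obtains \<mu> where "\<mu> > 0" "\<And>f. \<mu> * gnorm G (neumann_solution f) \<le> gnorm G f"
proof -
  obtain \<mu> where \<mu>: "\<mu> > 0" "\<And>x. \<mu> * (norm x)\<^sup>2 \<le> Re (cinner (map_prod m a x) x)"
    using ma.coercive unfolding coercive_def by blast
  have "\<mu> * gnorm G (neumann_solution f) \<le> gnorm G f" for f
  proof -
    define u where "u = neumann_solution f"
    obtain q where u: "u \<in> domG" and q: "q \<in> domGs"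
      and aGu: "a (G u) = q + G f" and mu: "m u + Gs q = f"
      using neumann_solution_eqs unfolding u_def by blast
    have "cinner q (G u) = cinner (Gs q) u"
      using cinner_G_Gs[OF q u] by (metis cinner_commute)
    also have "\<dots> = cinner f u - cinner (m u) u"
      using mu by (metis cinner_diff_left add_diff_cancel_left')
    finally have "cinner (map_prod m a (u, G u)) (u, G u) = cinner (f, G f) (u, G u)"
      unfolding map_prod_simp cinner_Pair aGu by (simp add: cinner_add_left)
    then have "\<mu> * (norm (u, G u))\<^sup>2 \<le> Re (cinner (f, G f) (u, G u))"
      using \<mu>(2) by metis
    then show ?thesis
      unfolding gnorm_Pair u_def by (rule norm_le_if_sq_le_cinner)
  qed
  then show thesis using that \<mu>(1) by blast
qed

lemma gproj_neumann_solution_eqI: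
  assumes u0: "u0 \<in> BDG" and f: "f \<in> BDG" and DtN: "DtN domG G domD D a m u0 = G f"
  shows "gproj BDG G (neumann_solution f) = u0"
proof -
  define u where "u = dir_sol domG G domD D a m u0"
  have u: "u \<in> domG" "a (G u) \<in> domD" "D (a (G u)) = m u" "u - u0 \<in> domDs"
    using dirichlet_solution_dir_sol[OF BDG_subset_domG[OF u0]]
    unfolding u_def dirichlet_solution_def by auto
  define q where "q = a (G u) - G f"
  have "gproj BDD D (a (G u)) = G f"
    using DtN unfolding DtN_def u_def .
  then have q_domGs: "q \<in> domGs"
    unfolding q_def using diff_gproj_BDD[OF u(2)] by simp
  have "D q = m u - f"
    unfolding q_def using D_diff[OF u(2) G_BDG_in_domD[OF f]] u(3) D_G_BDG[OF f] by simp
  then have "Gs q = f - m u"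
    using D_domGs[OF q_domGs] by (simp add: algebra_simps)
  moreover have "inv a q = G u - inv a (G f)"
    unfolding q_def a.inv_diff a.inv_apply ..
  ultimately have "block_op domG G a m (u, q) = (f, - inv a (G f))"
    unfolding block_op_Pair by simp
  then have "block_inv domG G a m (f, - inv a (G f)) = (u, q)"
    using u(1) q_domGs by (intro block_inv_eqI) (simp_all add: block_dom_iff)
  then show ?thesis
    unfolding neumann_solution_def using gproj_BDG_eqI[OF u(1) u0 u(4)] by simp
qed

lemma neumann_solution_add:
  assumes "f1 \<in> domG" "f2 \<in> domG"
  shows "neumann_solution (f1 + f2) = neumann_solution f1 + neumann_solution f2"
proof -
  have eq: "(f1 + f2, - inv a (G (f1 + f2))) = (f1, - inv a (G f1)) + (f2, - inv a (G f2))"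
    by (simp add: G_add[OF assms] a.inv_add)
  show ?thesis
    unfolding neumann_solution_def eq block_inv_add by simp
qed

lemma neumann_solution_scaleC:
  assumes "f \<in> domG"
  shows "neumann_solution (scaleC c f) = scaleC c (neumann_solution f)"
proof -
  have eq: "(scaleC c f, - inv a (G (scaleC c f))) = scaleC c (f, - inv a (G f))"
    by (simp add: G_scaleC[OF assms] a.inv_scaleC scaleC_minus_right)
  show ?thesis
    unfolding neumann_solution_def eq block_inv_scaleC by (simp add: scaleC_prod_def)
qed

lemma neumann_solution_in_domG: "neumann_solution f \<in> domG"
  using neumann_solution_eqs by metis

end

section \<open>The Dirichlet-to-Neumann operator in \<open>H\<close>\<close>

locale dtn_setting_H = dtn_setting domG G domD D a m
  for domG :: "'h0::chilbert_space set" and G :: "'h0 \<Rightarrow> 'h1::chilbert_space"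
    and domD :: "'h1 set" and D :: "'h1 \<Rightarrow> 'h0"
    and a :: "'h1 \<Rightarrow> 'h1" and m :: "'h0 \<Rightarrow> 'h0" +
  fixes \<kappa> :: "'h0 \<Rightarrow> 'h::chilbert_space"
  assumes kappa_lin: "clinear_on (BD_G domG G domD D) \<kappa>"
    and kappa_bdd: "\<exists>C. \<forall>x\<in>BD_G domG G domD D. norm (\<kappa> x) \<le> C * gnorm G x"
    and kappa_inj: "inj_on \<kappa> (BD_G domG G domD D)"
    and kappa_dense: "closure (\<kappa> ` BD_G domG G domD D) = UNIV"
begin

abbreviation "\<kappa>s \<equiv> kappa_adj domG G domD D \<kappa>"

lemma kappa_bound:
  obtains C where "C \<ge> 0" "\<And>x. x \<in> BDG \<Longrightarrow> norm (\<kappa> x) \<le> C * gnorm G x"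
proof -
  obtain C where C: "\<forall>x\<in>BDG. norm (\<kappa> x) \<le> C * gnorm G x"
    using kappa_bdd by blast
  have "norm (\<kappa> x) \<le> max C 0 * gnorm G x" if "x \<in> BDG" for x
    using C that gnorm_nonneg[of G x] by (meson max.cobounded1 mult_right_mono order_trans)
  then show thesis by (rule that[rotated]) auto
qed

lemma closed_graph_BDG: "closed {(x, G x) | x. x \<in> BDG}"
proof -
  have "{(x, G x) | x. x \<in> BDG} = {(x, G x) | x. x \<in> domG}
      \<inter> (\<Inter>y\<in>domDs. {p. cinner (fst p) y + cinner (snd p) (G y) = 0})"
    by (auto simp: BDG_iff ginner_def)
  then show ?thesis
    by (simp only:) (intro closed_Int closed_graph_G closed_INT ballI closed_Collect_eq;
        auto intro!: continuous_intros)
qed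

lemma csubspace_graph_BDG: "csubspace {(x, G x) | x. x \<in> BDG}"
  using clinear_on_subset[OF clinear_G _ csubspace_BDG] BDG_subset_domG
  by (intro csubspace_graph) blast

lemma kappa_adj_exists: "\<exists>f\<in>BDG. \<forall>u\<in>BDG. cinner (\<kappa> u) \<psi> = ginner G u f"
proof -
  obtain C where C: "C \<ge> 0" "\<And>x. x \<in> BDG \<Longrightarrow> norm (\<kappa> x) \<le> C * gnorm G x"
    using kappa_bound by blast
  define l where "l P = cinner \<psi> (\<kappa> (fst P))" for P :: "'h0 \<times> 'h1"
  have "\<exists>F\<in>{(x, G x) | x. x \<in> BDG}. \<forall>P\<in>{(x, G x) | x. x \<in> BDG}. l P = cinner F P"
  proof (rule riesz_representation_csubspace[OF csubspace_graph_BDG closed_graph_BDG])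
    fix P1 P2 assume "P1 \<in> {(x, G x) | x. x \<in> BDG}" "P2 \<in> {(x, G x) | x. x \<in> BDG}"
    then show "l (P1 + P2) = l P1 + l P2"
      unfolding l_def using clinear_on_add[OF kappa_lin] by (auto simp: cinner_add_right)
  next
    fix c P assume "P \<in> {(x, G x) | x. x \<in> BDG}"
    then show "l (scaleC c P) = c * l P"
      unfolding l_def using clinear_on_scaleC[OF kappa_lin] by (auto simp: cinner_scaleC_right)
  next
    fix P assume "P \<in> {(x, G x) | x. x \<in> BDG}"
    then obtain x where x: "x \<in> BDG" "P = (x, G x)" by blast
    have "cmod (l P) \<le> norm \<psi> * norm (\<kappa> x)"
      unfolding l_def x(2) by (simp add: cmod_cinner_le)
    also have "\<dots> \<le> norm \<psi> * (C * gnorm G x)"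
      using C x by (simp add: mult_left_mono)
    finally show "cmod (l P) \<le> (norm \<psi> * C) * norm P"
      unfolding x(2) gnorm_Pair by (simp add: mult.assoc)
  qed
  then obtain f where f: "f \<in> BDG" "\<forall>u\<in>BDG. cinner \<psi> (\<kappa> u) = ginner G f u"
    unfolding l_def ginner_Pair by auto
  have "cinner (\<kappa> u) \<psi> = ginner G u f" if "u \<in> BDG" for u
    using f(2) that by (metis cinner_commute ginner_commute)
  with f show ?thesis by blast
qed

lemma kappa_adj_eqI:
  assumes f: "f \<in> BDG" and repr: "\<forall>u\<in>BDG. cinner (\<kappa> u) \<psi> = ginner G u f"
  shows "\<kappa>s \<psi> = f"
  unfolding kappa_adj_def
proof (rule the_equality)
  show "f \<in> BDG \<and> (\<forall>u\<in>BDG. cinner (\<kappa> u) \<psi> = ginner G u f)"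
    using f repr by blast
  fix g
  assume g: "g \<in> BDG \<and> (\<forall>u\<in>BDG. cinner (\<kappa> u) \<psi> = ginner G u g)"
  define d where "d = g - f"
  have d: "d \<in> BDG"
    unfolding d_def using csubspace_diff[OF csubspace_BDG] g f by blast
  have "ginner G d d = ginner G d g - ginner G d f"
    unfolding d_def ginner_def
    using G_diff[OF BDG_subset_domG BDG_subset_domG, OF conjunct1[OF g] f]
    by (simp add: cinner_diff_right)
  also have "\<dots> = 0"
    using g repr d by auto
  finally have "d = 0"
    by (rule ginner_self_eq_0D)
  then show "g = f"
    unfolding d_def by simp
qed

lemma kappa_adj_in_BDG: "\<kappa>s \<psi> \<in> BDG"
  and cinner_kappa_adj: "u \<in> BDG \<Longrightarrow> cinner (\<kappa> u) \<psi> = ginner G u (\<kappa>s \<psi>)"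
  using kappa_adj_exists[of \<psi>] kappa_adj_eqI by metis+

lemma kappa_adj_add: "\<kappa>s (\<psi>1 + \<psi>2) = \<kappa>s \<psi>1 + \<kappa>s \<psi>2"
proof (rule kappa_adj_eqI)
  show "\<kappa>s \<psi>1 + \<kappa>s \<psi>2 \<in> BDG"
    using csubspace_add[OF csubspace_BDG kappa_adj_in_BDG kappa_adj_in_BDG] .
  show "\<forall>u\<in>BDG. cinner (\<kappa> u) (\<psi>1 + \<psi>2) = ginner G u (\<kappa>s \<psi>1 + \<kappa>s \<psi>2)"
    using cinner_kappa_adj G_add[OF BDG_subset_domG BDG_subset_domG, OF kappa_adj_in_BDG kappa_adj_in_BDG]
    by (simp add: ginner_def cinner_add_right)
qed

lemma kappa_adj_scaleC: "\<kappa>s (scaleC c \<psi>) = scaleC c (\<kappa>s \<psi>)"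
proof (rule kappa_adj_eqI)
  show "scaleC c (\<kappa>s \<psi>) \<in> BDG"
    using csubspace_scaleC[OF csubspace_BDG kappa_adj_in_BDG] .
  show "\<forall>u\<in>BDG. cinner (\<kappa> u) (scaleC c \<psi>) = ginner G u (scaleC c (\<kappa>s \<psi>))"
    using cinner_kappa_adj G_scaleC[OF BDG_subset_domG, OF kappa_adj_in_BDG]
    by (simp add: ginner_def cinner_scaleC_right distrib_left)
qed

lemma kappa_adj_diff: "\<kappa>s (\<psi>1 - \<psi>2) = \<kappa>s \<psi>1 - \<kappa>s \<psi>2"
  using kappa_adj_add[of \<psi>1 "scaleC (-1) \<psi>2"] kappa_adj_scaleC[of "-1" \<psi>2]
  by (simp add: scaleC_minus1_left)

lemma gnorm_kappa_adj_le:
  obtains C where "C \<ge> 0" "\<And>\<psi>. gnorm G (\<kappa>s \<psi>) \<le> C * norm \<psi>"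
proof -
  obtain C where C: "C \<ge> 0" "\<And>x. x \<in> BDG \<Longrightarrow> norm (\<kappa> x) \<le> C * gnorm G x"
    using kappa_bound by blast
  have "gnorm G (\<kappa>s \<psi>) \<le> C * norm \<psi>" for \<psi>
  proof -
    define f where "f = \<kappa>s \<psi>"
    have f: "f \<in> BDG"
      unfolding f_def by (rule kappa_adj_in_BDG)
    have "(gnorm G f)\<^sup>2 = Re (cinner (\<kappa> f) \<psi>)"
      using cinner_kappa_adj[OF f, of \<psi>] unfolding f_def[symmetric] gnorm_Pair ginner_Pair
      by (simp add: Re_cinner_self)
    also have "\<dots> \<le> norm (\<kappa> f) * norm \<psi>"
      using complex_Re_le_cmod cmod_cinner_le by (rule order_trans)
    also have "\<dots> \<le> (C * gnorm G f) * norm \<psi>"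
      using C(2)[OF f] by (rule mult_right_mono) simp
    finally have le: "gnorm G f * gnorm G f \<le> (C * norm \<psi>) * gnorm G f"
      by (simp add: power2_eq_square algebra_simps)
    show ?thesis
    proof (cases "gnorm G f = 0")
      case True
      then show ?thesis using C(1) by (simp add: f_def)
    next
      case False
      then have "0 < gnorm G f"
        using gnorm_nonneg[of G f] by linarith
      with le show ?thesis
        unfolding f_def by (rule mult_right_le_imp_le)
    qed
  qed
  with C(1) show thesis using that by blast
qed

lemma kappa_adj_eq_0D:
  assumes "\<kappa>s \<psi> = 0"
  shows "\<psi> = 0"
proof (rule orthogonal_dense_eq_0[OF kappa_dense])
  fix x assume "x \<in> \<kappa> ` BDG"
  then obtain u where u: "u \<in> BDG" "x = \<kappa> u" by blast
  show "cinner x \<psi> = 0"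
    using cinner_kappa_adj[OF u(1), of \<psi>] u(2) assms G_0 by (simp add: ginner_def)
qed

definition DtN_H_inv :: "'h \<Rightarrow> 'h" where
  "DtN_H_inv \<psi> = \<kappa> (gproj BDG G (neumann_solution (\<kappa>s \<psi>)))"

lemma gproj_neumann_solution_in_BDG: "gproj BDG G (neumann_solution f) \<in> BDG"
  using gproj_BDG(1)[OF neumann_solution_in_domG] .

lemma DtN_H_iff: "(\<phi>, \<psi>) \<in> DtN_H domG G domD D a m \<kappa> \<longleftrightarrow> \<phi> = DtN_H_inv \<psi>"
proof
  assume "(\<phi>, \<psi>) \<in> DtN_H domG G domD D a m \<kappa>"
  then obtain v where v: "v \<in> BDG" "\<kappa> v = \<phi>" "DtN domG G domD D a m v = G (\<kappa>s \<psi>)"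
    unfolding DtN_H_def by blast
  then show "\<phi> = DtN_H_inv \<psi>"
    unfolding DtN_H_inv_def using gproj_neumann_solution_eqI[OF v(1) kappa_adj_in_BDG v(3)] by simp
next
  assume "\<phi> = DtN_H_inv \<psi>"
  then show "(\<phi>, \<psi>) \<in> DtN_H domG G domD D a m \<kappa>"
    unfolding DtN_H_def DtN_H_inv_def
    using gproj_neumann_solution_in_BDG neumann_solution_dirichlet(2)[OF kappa_adj_in_BDG] by blast
qed

lemma DtN_H_inv_add: "DtN_H_inv (\<psi>1 + \<psi>2) = DtN_H_inv \<psi>1 + DtN_H_inv \<psi>2"
proof -
  have f: "\<kappa>s \<psi> \<in> domG" for \<psi>
    using BDG_subset_domG[OF kappa_adj_in_BDG] .
  show ?thesis
    unfolding DtN_H_inv_def kappa_adj_add neumann_solution_add[OF f f]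
      gproj_BDG_add[OF neumann_solution_in_domG neumann_solution_in_domG]
    by (rule clinear_on_add[OF kappa_lin gproj_neumann_solution_in_BDG gproj_neumann_solution_in_BDG])
qed

lemma DtN_H_inv_scaleC: "DtN_H_inv (scaleC c \<psi>) = scaleC c (DtN_H_inv \<psi>)"
  unfolding DtN_H_inv_def kappa_adj_scaleC
    neumann_solution_scaleC[OF BDG_subset_domG[OF kappa_adj_in_BDG]]
    gproj_BDG_scaleC[OF neumann_solution_in_domG]
  using clinear_on_scaleC[OF kappa_lin gproj_neumann_solution_in_BDG] .

lemma norm_DtN_H_inv_le:
  obtains C where "\<And>\<psi>. norm (DtN_H_inv \<psi>) \<le> C * norm \<psi>"
proof -
  obtain C\<kappa> where C\<kappa>: "C\<kappa> \<ge> 0" "\<And>x. x \<in> BDG \<Longrightarrow> norm (\<kappa> x) \<le> C\<kappa> * gnorm G x"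
    using kappa_bound by blast
  obtain Cs where Cs: "Cs \<ge> 0" "\<And>\<psi>. gnorm G (\<kappa>s \<psi>) \<le> Cs * norm \<psi>"
    using gnorm_kappa_adj_le by blast
  obtain \<mu> where \<mu>: "\<mu> > 0" "\<And>f. \<mu> * gnorm G (neumann_solution f) \<le> gnorm G f"
    using gnorm_neumann_solution_le by blast
  have "norm (DtN_H_inv \<psi>) \<le> (C\<kappa> * Cs / \<mu>) * norm \<psi>" for \<psi>
  proof -
    have "norm (DtN_H_inv \<psi>) \<le> C\<kappa> * gnorm G (gproj BDG G (neumann_solution (\<kappa>s \<psi>)))"
      unfolding DtN_H_inv_def using C\<kappa> gproj_neumann_solution_in_BDG by blast
    also have "\<dots> \<le> C\<kappa> * gnorm G (neumann_solution (\<kappa>s \<psi>))"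
      using gnorm_gproj_BDG_le[OF neumann_solution_in_domG] C\<kappa>(1) by (rule mult_left_mono)
    also have "\<dots> \<le> C\<kappa> * (Cs * norm \<psi> / \<mu>)"
      using \<mu>(2)[of "\<kappa>s \<psi>"] Cs(2)[of \<psi>] \<mu>(1) C\<kappa>(1)
      by (intro mult_left_mono) (simp_all add: field_simps)
    finally show ?thesis by (simp add: field_simps)
  qed
  then show thesis by (rule that)
qed

lemma bounded_clinear_op_DtN_H_inv: "bounded_clinear_op DtN_H_inv"
  using norm_DtN_H_inv_le DtN_H_inv_add DtN_H_inv_scaleC by (metis bounded_clinear_opI)

lemma inj_DtN_H_inv: "inj DtN_H_inv"
proof (rule injI)
  fix \<psi>1 \<psi>2
  assume "DtN_H_inv \<psi>1 = DtN_H_inv \<psi>2"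
  then have "gproj BDG G (neumann_solution (\<kappa>s \<psi>1)) = gproj BDG G (neumann_solution (\<kappa>s \<psi>2))"
    unfolding DtN_H_inv_def using kappa_inj gproj_neumann_solution_in_BDG by (auto dest: inj_onD)
  \<comment> \<open>apply \<open>\<Lambda>\<close> and then \<open>D\<close>, which inverts \<open>G\<close> on \<open>BD(G)\<close>\<close>
  then have "D (G (\<kappa>s \<psi>1)) = D (G (\<kappa>s \<psi>2))"
    using neumann_solution_dirichlet(2)[OF kappa_adj_in_BDG] by metis
  then have "\<kappa>s (\<psi>1 - \<psi>2) = 0"
    unfolding kappa_adj_diff D_G_BDG[OF kappa_adj_in_BDG] by simp
  then have "\<psi>1 - \<psi>2 = 0"
    by (rule kappa_adj_eq_0D)
  then show "\<psi>1 = \<psi>2"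
    by simp
qed

end

theorem proposition3p7:
  fixes domG :: "'h0::chilbert_space set" and G :: "'h0 \<Rightarrow> 'h1::chilbert_space"
    and domD :: "'h1 set" and D :: "'h1 \<Rightarrow> 'h0"
    and \<kappa> :: "'h0 \<Rightarrow> 'h::chilbert_space"
    and a :: "'h1 \<Rightarrow> 'h1" and m :: "'h0 \<Rightarrow> 'h0"
  assumes G: "densely_defined_closed domG G"
    and D: "densely_defined_closed domD D"
    and GD: "op_subset (adj_dom domG G) (\<lambda>y. - adj domG G y) domD D"
    and kappa_lin: "clinear_on (BD_G domG G domD D) \<kappa>"
    and kappa_bdd: "\<exists>C. \<forall>x\<in>BD_G domG G domD D. norm (\<kappa> x) \<le> C * gnorm G x"
    and kappa_inj: "inj_on \<kappa> (BD_G domG G domD D)"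
    and kappa_dense: "closure (\<kappa> ` BD_G domG G domD D) = UNIV"
    and a: "bounded_clinear_op a" "coercive a"
    and m: "bounded_clinear_op m" "coercive m"
  shows "(\<forall>y. \<exists>!x. x \<in> block_dom domG G \<and> block_op domG G a m x = y)
    \<and> (\<exists>L. bounded_clinear_op L \<and> inj L
         \<and> (\<forall>\<phi> \<psi>. (\<phi>, \<psi>) \<in> DtN_H domG G domD D a m \<kappa> \<longleftrightarrow> \<phi> = L \<psi>)
         \<and> (\<forall>\<psi>. L \<psi> = \<kappa> (gproj (BD_G domG G domD D) G
              (fst (block_inv domG G a m
                 (kappa_adj domG G domD D \<kappa> \<psi>,
                  - inv a (G (kappa_adj domG G domD D \<kappa> \<psi>))))))))"
proof -
  interpret dtn_setting_H domG G domD D a m \<kappa>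
    by unfold_locales (rule assms)+
  have "\<forall>\<psi>. DtN_H_inv \<psi> = \<kappa> (gproj BDG G (fst (block_inv domG G a m (\<kappa>s \<psi>, - inv a (G (\<kappa>s \<psi>))))))"
    by (simp add: DtN_H_inv_def neumann_solution_def)
  then show ?thesis
    using block_op_bij bounded_clinear_op_DtN_H_inv inj_DtN_H_inv DtN_H_iff by blast
qed

end
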